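(* Let $f \in \mathcal{C}^1(\mathbb{R},\mathbb{R})$ be such that $|\!|\!|f|\!|\!| < \infty$, let $\lambda \ge 1$, and let $\kappa \in (0,\frac12)$. Then, for every rough path $(X,\mathbb{X})$ on $S^1$ and every path $(Y,Y')$ controlled by $X$ for which the right-hand side below is finite, the bound $$\Bigl|\int_{S^1} f(\lambda x) Y(x)\,dX(x)\Bigr| \le C\Bigl(\lambda^{\kappa - \frac12} |Y(0)|\, \|X\|_{\frac12-\kappa} + \lambda^{2\kappa-1} \mathscr{K}^\kappa(Y,X)\Bigr)$$ holds uniformly for all $\lambda > 1$, with a constant $C$ depending only on $|\!|\!|f|\!|\!|$ (for the given $\kappa$).
   Context: $S^1$ is identified with $[0,2\pi)$. For $X\colon S^1\to\mathbb{R}$ and $\alpha\in(0,1]$, $\|X\|_\alpha=\sup_{x\ne y}|\delta X(x,y)|/|x-y|^\alpha$ with $\delta X(x,y)=X(y)-X(x)$; $\|X\|_{\mathcal{C}^\alpha}=\|X\|_\alpha+\|X\|_\infty$; for a function $\mathbb{X}$ of two variables, $\|\mathbb{X}\|_\alpha=\sup_{x\neq y}|\mathbb{X}(x,y)|/|x-y|^\alpha$. A (scalar) rough path is a pair $(X,\mathbb{X})$ with $X$ continuous and $\mathbb{X}$ a continuous function of two variables vanishing on the diagonal satisfying $\mathbb{X}(x,z)-\mathbb{X}(x,y)-\mathbb{X}(y,z)=\delta X(x,y)\,\delta X(y,z)$ (with the periodicity convention that two-variable functions on $S^1$ are evaluated with $x\in[0,2\pi)$, $y\in[x,x+2\pi)$).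 A pair $(Y,Y')$ is controlled by $X$ with remainder $R^Y(x,y)=\delta Y(x,y)-Y'(x)\,\delta X(x,y)$. The rough integral $\int Z\,dX$ of a controlled pair $(Z,Z')$ is the limit, as the mesh of the partition $\mathcal{P}$ of the integration interval tends to $0$, of $\sum_{[x,y]\in\mathcal{P}}\bigl(Z(x)\delta X(x,y)+Z'(x)\mathbb{X}(x,y)\bigr)$; here $Z(x)=f(\lambda x)Y(x)$ with derivative process $Z'(x)=f(\lambda x)Y'(x)$. Define $\mathscr{K}^\kappa(Y,X)=\|Y\|_{\frac12-\kappa}\|X\|_{\frac12-\kappa}+\|\mathbb{X}\|_{1-2\kappa}\|Y'\|_{\mathcal{C}^{3\kappa}}+\|R^Y\|_{\frac12+2\kappa}\|X\|_{\frac12-\kappa}$, and for $f\in\mathcal{C}^1$, $|\!|\!|f|\!|\!|=\sum_{n\in\mathbb{Z}}\sqrt{1+|n|}\sup_{0\le t\le1}(|f(n+t)|+|f'(n+t)|)$. *)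

theory Defs
  imports "HOL-Analysis.Analysis"
begin

text \<open>S^1 is identified with [0, 2 pi). Functions on S^1 are modelled as 2 pi-periodic
  functions on the reals; two-variable functions are evaluated with x in [0,2 pi),
  y in [x, x + 2 pi), and |x - y| = y - x there.\<close>

definition circ_periodic :: "(real \<Rightarrow> real) \<Rightarrow> bool" where
  "circ_periodic X \<longleftrightarrow> (\<forall>x. X (x + 2*pi) = X x)"

definition incr :: "(real \<Rightarrow> real) \<Rightarrow> real \<Rightarrow> real \<Rightarrow> real" where
  "incr X x y = X y - X x"

definition hpairs :: "(real \<times> real) set" where
  "hpairs = {(x, y). 0 \<le> x \<and> x < 2*pi \<and> x < y \<and> y < x + 2*pi}"

definition hquot2 :: "real \<Rightarrow> (real \<Rightarrow> real \<Rightarrow> real) \<Rightarrow> real set" where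
  "hquot2 \<alpha> G = (\<lambda>(x, y). \<bar>G x y\<bar> / (y - x) powr \<alpha>) ` hpairs"

definition hnorm2 :: "real \<Rightarrow> (real \<Rightarrow> real \<Rightarrow> real) \<Rightarrow> real" where
  "hnorm2 \<alpha> G = Sup (hquot2 \<alpha> G)"

definition hfin2 :: "real \<Rightarrow> (real \<Rightarrow> real \<Rightarrow> real) \<Rightarrow> bool" where
  "hfin2 \<alpha> G \<longleftrightarrow> bdd_above (hquot2 \<alpha> G)"

definition hnorm :: "real \<Rightarrow> (real \<Rightarrow> real) \<Rightarrow> real" where
  "hnorm \<alpha> X = hnorm2 \<alpha> (incr X)"

definition hfin :: "real \<Rightarrow> (real \<Rightarrow> real) \<Rightarrow> bool" where
  "hfin \<alpha> X \<longleftrightarrow> hfin2 \<alpha> (incr X)"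

definition supnorm :: "(real \<Rightarrow> real) \<Rightarrow> real" where
  "supnorm X = Sup ((\<lambda>x. \<bar>X x\<bar>) ` {0..<2*pi})"

definition supfin :: "(real \<Rightarrow> real) \<Rightarrow> bool" where
  "supfin X \<longleftrightarrow> bdd_above ((\<lambda>x. \<bar>X x\<bar>) ` {0..<2*pi})"

definition cnorm :: "real \<Rightarrow> (real \<Rightarrow> real) \<Rightarrow> real" where
  "cnorm \<alpha> X = hnorm \<alpha> X + supnorm X"

definition red2 :: "(real \<Rightarrow> real \<Rightarrow> real) \<Rightarrow> real \<Rightarrow> real \<Rightarrow> real" where
  "red2 G x y = (let s = 2*pi * of_int \<lfloor>x / (2*pi)\<rfloor> in G (x - s) (y - s))"

definition rdomain :: "(real \<times> real) set" where
  "rdomain = {(x, y). 0 \<le> x \<and> x < 2*pi \<and> x \<le> y \<and> y < x + 2*pi}"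

definition rough_path :: "(real \<Rightarrow> real) \<Rightarrow> (real \<Rightarrow> real \<Rightarrow> real) \<Rightarrow> bool" where
  "rough_path X XX \<longleftrightarrow>
     circ_periodic X \<and> continuous_on UNIV X \<and>
     continuous_on rdomain (\<lambda>p. XX (fst p) (snd p)) \<and>
     (\<forall>x. 0 \<le> x \<and> x < 2*pi \<longrightarrow> XX x x = 0) \<and>
     (\<forall>x y z. 0 \<le> x \<and> x < 2*pi \<and> x \<le> y \<and> y \<le> z \<and> z < x + 2*pi \<longrightarrow>
        XX x z - XX x y - red2 XX y z = incr X x y * incr X y z)"

definition remainder :: "(real \<Rightarrow> real) \<Rightarrow> (real \<Rightarrow> real) \<Rightarrow> (real \<Rightarrow> real) \<Rightarrow> real \<Rightarrow> real \<Rightarrow> real" where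
  "remainder Y Y' X x y = incr Y x y - Y' x * incr X x y"

definition partition :: "nat \<Rightarrow> (nat \<Rightarrow> real) \<Rightarrow> bool" where
  "partition n p \<longleftrightarrow> n \<ge> 1 \<and> p 0 = 0 \<and> p n = 2*pi \<and> (\<forall>k<n. p k < p (Suc k))"

definition mesh :: "nat \<Rightarrow> (nat \<Rightarrow> real) \<Rightarrow> real" where
  "mesh n p = Max ((\<lambda>k. p (Suc k) - p k) ` {..<n})"

definition rsum :: "(real \<Rightarrow> real) \<Rightarrow> (real \<Rightarrow> real) \<Rightarrow> (real \<Rightarrow> real) \<Rightarrow> (real \<Rightarrow> real \<Rightarrow> real)
                    \<Rightarrow> nat \<Rightarrow> (nat \<Rightarrow> real) \<Rightarrow> real" where
  "rsum Z Z' X XX n p = (\<Sum>k<n. Z (p k) * incr X (p k) (p (Suc k)) + Z' (p k) * XX (p k) (p (Suc k)))"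

definition has_rough_integral :: "(real \<Rightarrow> real) \<Rightarrow> (real \<Rightarrow> real) \<Rightarrow> (real \<Rightarrow> real)
                    \<Rightarrow> (real \<Rightarrow> real \<Rightarrow> real) \<Rightarrow> real \<Rightarrow> bool" where
  "has_rough_integral Z Z' X XX I \<longleftrightarrow>
     (\<forall>\<epsilon>>0. \<exists>\<delta>>0. \<forall>n p. partition n p \<and> mesh n p < \<delta> \<longrightarrow> \<bar>rsum Z Z' X XX n p - I\<bar> < \<epsilon>)"

definition Kkappa :: "real \<Rightarrow> (real \<Rightarrow> real) \<Rightarrow> (real \<Rightarrow> real) \<Rightarrow> (real \<Rightarrow> real)
                       \<Rightarrow> (real \<Rightarrow> real \<Rightarrow> real) \<Rightarrow> real" where
  "Kkappa \<kappa> Y Y' X XX =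
     hnorm (1/2 - \<kappa>) Y * hnorm (1/2 - \<kappa>) X
     + hnorm2 (1 - 2*\<kappa>) XX * cnorm (3*\<kappa>) Y'
     + hnorm2 (1/2 + 2*\<kappa>) (remainder Y Y' X) * hnorm (1/2 - \<kappa>) X"

definition C1 :: "(real \<Rightarrow> real) \<Rightarrow> bool" where
  "C1 f \<longleftrightarrow> (\<forall>x. f differentiable (at x)) \<and> continuous_on UNIV (deriv f)"

definition tseq :: "(real \<Rightarrow> real) \<Rightarrow> int \<Rightarrow> real" where
  "tseq f n = sqrt (1 + \<bar>real_of_int n\<bar>) *
     Sup ((\<lambda>t. \<bar>f (real_of_int n + t)\<bar> + \<bar>deriv f (real_of_int n + t)\<bar>) ` {0..1})"

definition triple_finite :: "(real \<Rightarrow> real) \<Rightarrow> bool" where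
  "triple_finite f \<longleftrightarrow> tseq f summable_on (UNIV :: int set)"

definition triple :: "(real \<Rightarrow> real) \<Rightarrow> real" where
  "triple f = infsum (tseq f) (UNIV :: int set)"

end

theory Submission
  imports Defs
begin

text \<open>
  Write the integral as the limit of Riemann sums of the germ
  \<open>\<Xi>(a,b) = F(a) Y(a) \<delta>X(a,b) + F(a) Y'(a) XX(a,b)\<close> with \<open>F(x) = f(\<lambda> x)\<close>.
  By Chen's relation the defect \<open>\<Xi>(a,d) - \<Xi>(a,b) - \<Xi>(b,d)\<close> is a sum of four products whose
  Hoelder exponents add up to \<open>1 + \<kappa>\<close>, \<open>3/2 - \<kappa>\<close> and \<open>2 - 2\<kappa>\<close>, all larger than 1. The sewing
  lemma therefore makes the Riemann sums converge, and on each cell \<open>[k/\<lambda>, (k+1)/\<lambda>]\<close> of the grid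
  of mesh \<open>1/\<lambda>\<close> it bounds the difference between the integral over the cell and the value of
  \<open>\<Xi>\<close> at the endpoints of the cell. On the \<open>k\<close>-th cell \<open>|F|\<close> and \<open>|F'|/\<lambda>\<close> are bounded by
  the supremum of \<open>|f| + |f'|\<close> over \<open>[k, k+1]\<close>, \<open>|Y|\<close> is bounded by
  \<open>|Y(0)| + \<parallel>Y\<parallel> sqrt(1+k) \<lambda> powr (\<kappa> - 1/2)\<close>, and the cell length \<open>1/\<lambda>\<close> turns every Hoelder
  factor into the corresponding power of \<open>\<lambda>\<close>. Summing over the cells produces exactly the
  weights \<open>sqrt(1+|n|)\<close> in the norm \<open>|||f|||\<close>.
\<close>

section \<open>Sewing on finite sets of points\<close>

definition next_in :: "real set \<Rightarrow> real \<Rightarrow> real" where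
  "next_in A a = Min {b\<in>A. a < b}"

definition chain_sum :: "(real \<Rightarrow> real \<Rightarrow> real) \<Rightarrow> real set \<Rightarrow> real" where
  "chain_sum G A = (\<Sum>a\<in>A - {Max A}. G a (next_in A a))"

lemma chain_sum_singleton [simp]: "chain_sum G {a} = 0"
  by (simp add: chain_sum_def)

lemma chain_sum_pair:
  assumes "a < b" shows "chain_sum G {a, b} = G a b"
proof -
  have "Max {a, b} = b" "{a, b} - {b} = {a}" "{x\<in>{a, b}. a < x} = {b}"
    using assms by auto
  then show ?thesis by (simp add: chain_sum_def next_in_def)
qed

lemma chain_sum_split:
  assumes fin: "finite A" and c: "c \<in> A"
  shows "chain_sum G A = chain_sum G {x\<in>A. x \<le> c} + chain_sum G {x\<in>A. c \<le> x}"
proof -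
  define L where "L = {x\<in>A. x \<le> c}"
  define R where "R = {x\<in>A. c \<le> x}"
  have fin': "finite L" "finite R" using fin by (auto simp: L_def R_def)
  have c_le_Max: "c \<le> Max A" and Max_A: "Max A \<in> A"
    using fin c by (auto intro: Max_in)
  have MaxL: "Max L = c" using fin' c by (intro Max_eqI) (auto simp: L_def)
  have MaxR: "Max R = Max A"
    using fin' fin c_le_Max Max_A by (intro Max_eqI) (auto simp: R_def)
  have next_L: "next_in L a = next_in A a" if "a \<in> L - {c}" for a
  proof -
    let ?S = "{b\<in>A. a < b}" and ?T = "{b\<in>L. a < b}"
    have fS: "finite ?S" and cS: "c \<in> ?S" using fin c that by (auto simp: L_def)
    then have "Min ?S \<le> c" "Min ?S \<in> ?S" using Min_in by auto
    then have "Min ?S \<in> ?T" by (auto simp: L_def)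
    moreover have "?T \<subseteq> ?S" by (auto simp: L_def)
    ultimately have "Min ?T = Min ?S"
      using fS by (metis Min_antimono Min_le antisym empty_iff finite_subset)
    then show ?thesis by (simp add: next_in_def)
  qed
  have next_R: "next_in R a = next_in A a" if "a \<in> R - {Max A}" for a
  proof -
    have "{b\<in>R. a < b} = {b\<in>A. a < b}" using that by (auto simp: R_def)
    then show ?thesis by (simp add: next_in_def)
  qed
  have "A - {Max A} = (L - {c}) \<union> (R - {Max A})"
    using MaxR c_le_Max by (auto simp: L_def R_def)
  moreover have "(L - {c}) \<inter> (R - {Max A}) = {}" by (auto simp: L_def R_def)
  ultimately have "chain_sum G A = (\<Sum>a\<in>L - {c}. G a (next_in A a)) + (\<Sum>a\<in>R - {Max A}. G a (next_in A a))"
    unfolding chain_sum_def using fin' by (simp add: sum.union_disjoint)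
  also have "\<dots> = chain_sum G L + chain_sum G R"
    unfolding chain_sum_def MaxL MaxR using next_L next_R by (intro arg_cong2[where f = "(+)"] sum.cong) auto
  finally show ?thesis by (simp add: L_def R_def)
qed

lemma strict_chain_mono:
  fixes p :: "nat \<Rightarrow> real"
  assumes "\<forall>k<n. p k < p (Suc k)" "i \<le> j" "j \<le> n"
  shows "p i \<le> p j"
  using assms(2,3)
proof (induction j)
  case (Suc j)
  then show ?case
    using assms(1) by (cases "i = Suc j") (auto intro: order_trans[OF _ less_imp_le])
qed simp

lemma chain_sum_refinement_bound:
  fixes p :: "nat \<Rightarrow> real"
  assumes inc: "\<forall>k<n. p k < p (Suc k)"
    and B: "finite B" "p ` {0..n} \<subseteq> B" "B \<subseteq> {p 0..p n}"
    and g: "\<And>k A. k < n \<Longrightarrow> finite A \<Longrightarrow> A \<noteq> {} \<Longrightarrow> A \<subseteq> {p k..p (Suc k)} \<Longrightarrow>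
              \<bar>chain_sum Xi A - Xi (Min A) (Max A)\<bar> \<le> g k"
  shows "\<bar>chain_sum Xi B - (\<Sum>k<n. Xi (p k) (p (Suc k)))\<bar> \<le> (\<Sum>k<n. g k)"
  using inc B g
proof (induction n arbitrary: B)
  case 0
  then have "B = {p 0}" by auto
  then show ?case by simp
next
  case (Suc n)
  define B1 where "B1 = {x\<in>B. x \<le> p n}"
  define B2 where "B2 = {x\<in>B. p n \<le> x}"
  have mono: "p i \<le> p j" if "i \<le> j" "j \<le> Suc n" for i j
    using strict_chain_mono[OF Suc.prems(1) that] .
  have "p n \<in> B" using Suc.prems(3) by auto
  then have split: "chain_sum Xi B = chain_sum Xi B1 + chain_sum Xi B2"
    unfolding B1_def B2_def using chain_sum_split[OF Suc.prems(2)] by blast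
  have "\<bar>chain_sum Xi B1 - (\<Sum>k<n. Xi (p k) (p (Suc k)))\<bar> \<le> (\<Sum>k<n. g k)"
  proof (rule Suc.IH)
    show "p ` {0..n} \<subseteq> B1" using Suc.prems(3) mono by (auto simp: B1_def)
  qed (use Suc.prems in \<open>auto simp: B1_def\<close>)
  moreover have "\<bar>chain_sum Xi B2 - Xi (p n) (p (Suc n))\<bar> \<le> g n"
  proof -
    have fin: "finite B2" and ends: "p n \<in> B2" "p (Suc n) \<in> B2"
      using Suc.prems(1-3) by (auto simp: B2_def)
    have sub: "B2 \<subseteq> {p n..p (Suc n)}" using Suc.prems(4) by (auto simp: B2_def)
    have "Min B2 = p n" "Max B2 = p (Suc n)"
      using fin ends sub by (intro Min_eqI Max_eqI; auto)+
    then show ?thesis using Suc.prems(5)[OF _ fin _ sub] ends by auto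
  qed
  ultimately show ?case by (simp add: split abs_le_iff)
qed

lemma chain_sum_split_gap:
  assumes fin: "finite A" and c: "c \<in> A" "c' \<in> A" "c < c'"
    and gap: "\<And>x. x \<in> A \<Longrightarrow> c < x \<Longrightarrow> c' \<le> x"
  shows "chain_sum G A = chain_sum G {x\<in>A. x \<le> c} + G c c' + chain_sum G {x\<in>A. c' \<le> x}"
proof -
  let ?R = "{x\<in>A. c \<le> x}"
  have "{x\<in>?R. x \<le> c'} = {c, c'}" using c gap by force
  moreover have "{x\<in>?R. c' \<le> x} = {x\<in>A. c' \<le> x}" using c by auto
  moreover have "chain_sum G ?R = chain_sum G {x\<in>?R. x \<le> c'} + chain_sum G {x\<in>?R. c' \<le> x}"
    using fin c by (intro chain_sum_split) auto
  ultimately show ?thesis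
    using chain_sum_split[OF fin c(1)] chain_sum_pair[OF c(3)] by simp
qed

lemma finite_gap_around:
  fixes A :: "real set"
  assumes fin: "finite A" and st: "s \<in> A" "t \<in> A" "s \<le> m" "m < t"
  obtains c c' where "c \<in> A" "c' \<in> A" "s \<le> c" "c \<le> m" "m < c'"
    "\<And>x. x \<in> A \<Longrightarrow> c < x \<Longrightarrow> c' \<le> x"
proof -
  define c where "c = Max {x\<in>A. x \<le> m}"
  define c' where "c' = Min {x\<in>A. c < x}"
  have fin_le: "finite {x\<in>A. x \<le> m}" and fin_gt: "finite {x\<in>A. c < x}" using fin by simp_all
  have "s \<in> {x\<in>A. x \<le> m}" using st by simp
  then have "c \<in> {x\<in>A. x \<le> m}" unfolding c_def using fin_le by (intro Max_in) auto
  have c_max: "\<And>x. x \<in> A \<Longrightarrow> x \<le> m \<Longrightarrow> x \<le> c" unfolding c_def using fin_le by (intro Max_ge) auto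
  have c: "c \<in> A" "s \<le> c" "c \<le> m"
    using \<open>c \<in> {x\<in>A. x \<le> m}\<close> c_max st by auto
  then have "t \<in> {x\<in>A. c < x}" using st by simp
  then have "c' \<in> {x\<in>A. c < x}" unfolding c'_def using fin_gt by (intro Min_in) auto
  have gap: "\<And>x. x \<in> A \<Longrightarrow> c < x \<Longrightarrow> c' \<le> x" unfolding c'_def using fin_gt by (intro Min_le) auto
  moreover have "m < c'" using c_max \<open>c' \<in> {x\<in>A. c < x}\<close> by fastforce
  ultimately show ?thesis using that c \<open>c' \<in> {x\<in>A. c < x}\<close> by blast
qed

lemma sewing_bound:
  fixes Xi :: "real \<Rightarrow> real \<Rightarrow> real" and G w :: "real \<Rightarrow> real"
  assumes diag: "\<And>a. lo \<le> a \<Longrightarrow> a \<le> hi \<Longrightarrow> Xi a a = 0"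
    and defect: "\<And>a b d. lo \<le> a \<Longrightarrow> a \<le> b \<Longrightarrow> b \<le> d \<Longrightarrow> d \<le> hi \<Longrightarrow>
                   \<bar>Xi a d - Xi a b - Xi b d\<bar> \<le> w (d - a)"
    and G_nonneg: "\<And>x. 0 \<le> x \<Longrightarrow> 0 \<le> G x"
    and G_mono: "\<And>x y. 0 \<le> x \<Longrightarrow> x \<le> y \<Longrightarrow> G x \<le> G y"
    and w_mono: "\<And>x y. 0 \<le> x \<Longrightarrow> x \<le> y \<Longrightarrow> w x \<le> w y"
    and G_rec: "\<And>x. 0 \<le> x \<Longrightarrow> 2 * G (x/2) + 2 * w x \<le> G x"
    and A: "finite A" "A \<noteq> {}" "A \<subseteq> {lo..hi}"
  shows "\<bar>chain_sum Xi A - Xi (Min A) (Max A)\<bar> \<le> G (Max A - Min A)"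
  using A
proof (induction "card A" arbitrary: A rule: less_induct)
  case less
  define s where "s = Min A"
  define t where "t = Max A"
  have sA: "s \<in> A" and tA: "t \<in> A" and bnd: "\<And>x. x \<in> A \<Longrightarrow> s \<le> x \<and> x \<le> t"
    using less.prems by (auto simp: s_def t_def)
  show ?case
  proof (cases "s = t")
    case True
    then have "A = {s}" using bnd sA by force
    then show ?thesis using diag less.prems G_nonneg by simp
  next
    case False
    then have st: "s < t" using bnd sA by force
    (* Split A at the last point c left of the midpoint and its successor c': both parts are at most
       half as long, and the two defects incurred are paid for by the recursion G_rec. *)
    define mid where "mid = (s + t) / 2"
    obtain c c' where cA: "c \<in> A" and c'A: "c' \<in> A" and sc: "s \<le> c" and c_mid: "c \<le> mid"
      and mid_c': "mid < c'" and gap: "\<And>x. x \<in> A \<Longrightarrow> c < x \<Longrightarrow> c' \<le> x"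
      using finite_gap_around[OF less.prems(1) sA tA, of mid] st by (auto simp: mid_def)
    have cc': "c < c'" using c_mid mid_c' by simp
    have c't: "c' \<le> t" using bnd c'A by blast
    define L where "L = {x\<in>A. x \<le> c}"
    define R where "R = {x\<in>A. c' \<le> x}"
    have decomp: "chain_sum Xi A = chain_sum Xi L + Xi c c' + chain_sum Xi R"
      unfolding L_def R_def by (rule chain_sum_split_gap[OF less.prems(1) cA c'A cc' gap])
    have fin: "finite L" "finite R" and ne: "L \<noteq> {}" "R \<noteq> {}"
      and sub: "L \<subseteq> {lo..hi}" "R \<subseteq> {lo..hi}"
      using less.prems sA sc tA c't by (auto simp: L_def R_def)
    have "t \<notin> L" using c_mid st by (auto simp: L_def mid_def)
    then have "L \<subset> A" using tA by (auto simp: L_def)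
    then have cardL: "card L < card A" by (rule psubset_card_mono[OF less.prems(1)])
    have "s \<notin> R" using sc cc' by (auto simp: R_def)
    then have "R \<subset> A" using sA by (auto simp: R_def)
    then have cardR: "card R < card A" by (rule psubset_card_mono[OF less.prems(1)])
    have "Min L = s" "Max L = c" "Min R = c'" "Max R = t"
      using fin ne sA sc cA c'A tA c't bnd by (intro Min_eqI Max_eqI; force simp: L_def R_def)+
    then have IH: "\<bar>chain_sum Xi L - Xi s c\<bar> \<le> G (c - s)" "\<bar>chain_sum Xi R - Xi c' t\<bar> \<le> G (t - c')"
      using less.hyps[OF cardL fin(1) ne(1) sub(1)] less.hyps[OF cardR fin(2) ne(2) sub(2)] by simp_all
    have lo_s: "lo \<le> s" and t_hi: "t \<le> hi" using sA tA less.prems by auto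
    have "\<bar>Xi s t - Xi s c - Xi c t\<bar> \<le> w (t - s)"
      using defect[of s c t] lo_s sc c_mid st t_hi by (simp add: mid_def)
    moreover have "\<bar>Xi c t - Xi c c' - Xi c' t\<bar> \<le> w (t - s)"
      using defect[of c c' t] w_mono[of "t - c" "t - s"] lo_s sc cc' c't t_hi by simp
    moreover have "G (c - s) \<le> G ((t - s)/2)" "G (t - c') \<le> G ((t - s)/2)"
      using G_mono sc c_mid c't mid_c' by (simp_all add: mid_def)
    moreover have "2 * G ((t - s)/2) + 2 * w (t - s) \<le> G (t - s)" using G_rec st by simp
    ultimately show ?thesis using decomp IH unfolding s_def[symmetric] t_def[symmetric] by linarith
  qed
qed

(* The constant c for which G x = c K x powr \<theta> satisfies 2 G (x/2) + 2 K x powr \<theta> = G x. *)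
definition sewing_const :: "real \<Rightarrow> real" where
  "sewing_const \<theta> = 2 / (1 - 2 powr (1 - \<theta>))"

lemma sewing_const_pos:
  assumes "1 < \<theta>" shows "0 < sewing_const \<theta>"
proof -
  have "2 powr (1 - \<theta>) < 2 powr 0" using assms by (intro powr_less_mono) auto
  then show ?thesis by (simp add: sewing_const_def)
qed

lemma sewing_const_rec:
  assumes "1 < \<theta>" "0 \<le> x"
  shows "2 * (sewing_const \<theta> * K * (x/2) powr \<theta>) + 2 * (K * x powr \<theta>) = sewing_const \<theta> * K * x powr \<theta>"
proof -
  have "2 powr (1 - \<theta>) < 2 powr 0" using assms by (intro powr_less_mono) auto
  then have "2 powr (1 - \<theta>) < 1" by simp
  then have "1 - 2 powr (1 - \<theta>) \<noteq> 0" by linarith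
  moreover have "\<And>d::real. d \<noteq> 0 \<Longrightarrow> 2 / d * d = 2" by simp
  ultimately have "sewing_const \<theta> * (1 - 2 powr (1 - \<theta>)) = 2" unfolding sewing_const_def by blast
  then have "K * x powr \<theta> * sewing_const \<theta> = K * x powr \<theta> * (2 + sewing_const \<theta> * 2 powr (1 - \<theta>))"
    by (simp add: algebra_simps)
  moreover have "(x/2) powr \<theta> = x powr \<theta> * 2 powr (1 - \<theta>) / 2"
    by (simp add: powr_divide powr_diff)
  ultimately show ?thesis by (simp add: algebra_simps)
qed

lemma sewing_bound_powr:
  fixes Xi :: "real \<Rightarrow> real \<Rightarrow> real" and K \<theta> :: "'i \<Rightarrow> real"
  assumes diag: "\<And>a. lo \<le> a \<Longrightarrow> a \<le> hi \<Longrightarrow> Xi a a = 0"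
    and defect: "\<And>a b d. lo \<le> a \<Longrightarrow> a \<le> b \<Longrightarrow> b \<le> d \<Longrightarrow> d \<le> hi \<Longrightarrow>
                   \<bar>Xi a d - Xi a b - Xi b d\<bar> \<le> (\<Sum>i\<in>J. K i * (d - a) powr \<theta> i)"
    and K: "\<And>i. i \<in> J \<Longrightarrow> 0 \<le> K i" and \<theta>: "\<And>i. i \<in> J \<Longrightarrow> 1 < \<theta> i"
    and A: "finite A" "A \<noteq> {}" "A \<subseteq> {lo..hi}"
  shows "\<bar>chain_sum Xi A - Xi (Min A) (Max A)\<bar>
           \<le> (\<Sum>i\<in>J. sewing_const (\<theta> i) * K i * (Max A - Min A) powr \<theta> i)"
proof (rule sewing_bound[where w = "\<lambda>x. \<Sum>i\<in>J. K i * x powr \<theta> i", OF diag defect _ _ _ _ A])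
  fix x y :: real assume "0 \<le> x"
  then show "0 \<le> (\<Sum>i\<in>J. sewing_const (\<theta> i) * K i * x powr \<theta> i)"
    using K \<theta> sewing_const_pos by (intro sum_nonneg mult_nonneg_nonneg; force)
  assume "x \<le> y"
  with \<open>0 \<le> x\<close> show "(\<Sum>i\<in>J. sewing_const (\<theta> i) * K i * x powr \<theta> i)
      \<le> (\<Sum>i\<in>J. sewing_const (\<theta> i) * K i * y powr \<theta> i)"
    and "(\<Sum>i\<in>J. K i * x powr \<theta> i) \<le> (\<Sum>i\<in>J. K i * y powr \<theta> i)"
    using K \<theta> sewing_const_pos
    by (intro sum_mono mult_left_mono powr_mono2 mult_nonneg_nonneg; force)+
next
  fix x :: real assume "0 \<le> x"
  then show "2 * (\<Sum>i\<in>J. sewing_const (\<theta> i) * K i * (x/2) powr \<theta> i) + 2 * (\<Sum>i\<in>J. K i * x powr \<theta> i)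
      \<le> (\<Sum>i\<in>J. sewing_const (\<theta> i) * K i * x powr \<theta> i)"
    using sewing_const_rec \<theta> by (simp add: sum_distrib_left sum.distrib[symmetric])
qed

section \<open>Riemann sums of germs\<close>

lemma partition_mono:
  assumes "partition n p" "i \<le> j" "j \<le> n" shows "p i \<le> p j"
  using assms strict_chain_mono unfolding partition_def by blast

lemma partition_range:
  assumes "partition n p" "k \<le> n" shows "0 \<le> p k" "p k \<le> 2*pi"
  using partition_mono[OF assms(1), of 0 k] partition_mono[OF assms(1), of k n] assms
  unfolding partition_def by auto

lemma partition_step_le_mesh:
  assumes "k < n" shows "p (Suc k) - p k \<le> mesh n p"
  unfolding mesh_def using assms by (intro Max_ge) auto

definition uniform_partition :: "nat \<Rightarrow> nat \<Rightarrow> real" where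
  "uniform_partition j i = 2*pi * real i / real (Suc j)"

lemma partition_uniform_partition: "partition (Suc j) (uniform_partition j)"
  unfolding partition_def uniform_partition_def
  by (auto intro!: divide_strict_right_mono mult_strict_left_mono)

lemma uniform_partition_step: "uniform_partition j (Suc k) - uniform_partition j k = 2*pi / real (Suc j)"
  unfolding uniform_partition_def by (simp add: diff_divide_distrib[symmetric] algebra_simps)

lemma mesh_uniform_partition: "mesh (Suc j) (uniform_partition j) = 2*pi / real (Suc j)"
  by (simp add: mesh_def uniform_partition_step image_constant_conv lessThan_empty_iff)

lemma uniform_partition_fine:
  assumes "0 < \<delta>" obtains M where "\<And>j. M \<le> j \<Longrightarrow> 2*pi / real (Suc j) \<le> \<delta>"
proof -
  obtain M where M: "2*pi / \<delta> < real M" using reals_Archimedean2 by blast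
  have "2*pi / real (Suc j) \<le> \<delta>" if "M \<le> j" for j
  proof -
    have "2*pi / \<delta> < real (Suc j)" using M that by simp
    then show ?thesis using assms by (simp add: field_simps)
  qed
  then show ?thesis using that by blast
qed

lemma powr_le_mult_powr:
  fixes l d \<theta> :: real
  assumes "0 \<le> l" "l \<le> d" "1 \<le> \<theta>"
  shows "l powr \<theta> \<le> l * d powr (\<theta> - 1)"
proof (cases "l = 0")
  case False
  then have "l powr \<theta> = l * l powr (\<theta> - 1)"
    using assms by (simp add: powr_mult_base)
  also have "\<dots> \<le> l * d powr (\<theta> - 1)" using assms by (intro mult_left_mono powr_mono2) auto
  finally show ?thesis .
qed simp

lemma exists_small_powr:
  fixes \<epsilon> C \<mu> :: real
  assumes "0 < \<epsilon>" "0 \<le> C" "0 < \<mu>"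
  obtains d where "0 < d" "d \<le> 1" "C * d powr \<mu> \<le> \<epsilon>"
proof
  define a where "a = \<epsilon> / (C + 1)"
  have a: "0 < a" using assms by (simp add: a_def)
  show "0 < min 1 (a powr (1/\<mu>))" "min 1 (a powr (1/\<mu>)) \<le> 1" using a by auto
  have "min 1 (a powr (1/\<mu>)) powr \<mu> \<le> (a powr (1/\<mu>)) powr \<mu>"
    using a assms by (intro powr_mono2) auto
  also have "\<dots> = a" using a assms by (simp add: powr_powr)
  finally have "C * min 1 (a powr (1/\<mu>)) powr \<mu> \<le> C * a" using assms by (simp add: mult_left_mono)
  also have "C * a \<le> \<epsilon>" using assms by (simp add: a_def field_simps)
  finally show "C * min 1 (a powr (1/\<mu>)) powr \<mu> \<le> \<epsilon>" .
qed

definition germ_sum :: "(real \<Rightarrow> real \<Rightarrow> real) \<Rightarrow> nat \<Rightarrow> (nat \<Rightarrow> real) \<Rightarrow> real" where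
  "germ_sum Xi n p = (\<Sum>k<n. Xi (p k) (p (Suc k)))"

definition germ_limit :: "(real \<Rightarrow> real \<Rightarrow> real) \<Rightarrow> real \<Rightarrow> bool" where
  "germ_limit Xi I \<longleftrightarrow>
     (\<forall>\<epsilon>>0. \<exists>\<delta>>0. \<forall>n p. partition n p \<and> mesh n p < \<delta> \<longrightarrow> \<bar>germ_sum Xi n p - I\<bar> < \<epsilon>)"

context
  fixes Xi :: "real \<Rightarrow> real \<Rightarrow> real" and K \<theta> :: real
  assumes germ_diag: "\<And>a. 0 \<le> a \<Longrightarrow> a \<le> 2*pi \<Longrightarrow> Xi a a = 0"
    and germ_defect: "\<And>a b d. 0 \<le> a \<Longrightarrow> a \<le> b \<Longrightarrow> b \<le> d \<Longrightarrow> d \<le> 2*pi \<Longrightarrow> d - a \<le> 1 \<Longrightarrow>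
                        \<bar>Xi a d - Xi a b - Xi b d\<bar> \<le> K * (d - a) powr \<theta>"
    and K_nonneg: "0 \<le> K" and exponent_gt1: "1 < \<theta>"
begin

lemma chain_sum_near_germ_sum:
  assumes "0 < \<epsilon>"
  obtains \<delta> where "0 < \<delta>"
    "\<And>n p B. partition n p \<Longrightarrow> \<forall>k<n. p (Suc k) - p k \<le> \<delta> \<Longrightarrow> finite B \<Longrightarrow>
       p ` {0..n} \<subseteq> B \<Longrightarrow> B \<subseteq> {0..2*pi} \<Longrightarrow> \<bar>chain_sum Xi B - germ_sum Xi n p\<bar> \<le> \<epsilon>"
proof -
  define S where "S = sewing_const \<theta> * K"
  have S: "0 \<le> S" using sewing_const_pos[OF exponent_gt1] K_nonneg by (simp add: S_def)
  obtain \<delta> where \<delta>: "0 < \<delta>" "\<delta> \<le> 1" "(2*pi*S) * \<delta> powr (\<theta> - 1) \<le> \<epsilon>"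
    using exists_small_powr[OF assms, of "2*pi*S" "\<theta> - 1"] S exponent_gt1 by auto
  have "\<bar>chain_sum Xi B - germ_sum Xi n p\<bar> \<le> \<epsilon>"
    if P: "partition n p" "\<forall>k<n. p (Suc k) - p k \<le> \<delta>" "finite B" "p ` {0..n} \<subseteq> B" "B \<subseteq> {0..2*pi}"
    for n p B
  proof -
    have inc: "\<forall>k<n. p k < p (Suc k)" and ends: "p 0 = 0" "p n = 2*pi"
      using P(1) unfolding partition_def by auto
    have "\<bar>chain_sum Xi B - germ_sum Xi n p\<bar> \<le> (\<Sum>k<n. S * (p (Suc k) - p k) * \<delta> powr (\<theta> - 1))"
      unfolding germ_sum_def
    proof (rule chain_sum_refinement_bound[OF inc P(3,4)])
      show "B \<subseteq> {p 0..p n}" using P(5) ends by simp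
      fix k A assume k: "k < n" and A: "finite A" "A \<noteq> {}" "A \<subseteq> {p k..p (Suc k)}"
      have cell: "0 \<le> p k" "p (Suc k) \<le> 2*pi" "p (Suc k) - p k \<le> 1"
        using partition_range[OF P(1)] k P(2) \<delta>(2) by force+
      have "Min A \<in> A" "Max A \<in> A" using A by simp_all
      then have "Min A \<le> Max A" "p k \<le> Min A" "Max A \<le> p (Suc k)"
        using A(1,3) by auto
      then have span: "0 \<le> Max A - Min A" "Max A - Min A \<le> p (Suc k) - p k" by auto
      have "\<bar>chain_sum Xi A - Xi (Min A) (Max A)\<bar> \<le> (\<Sum>i\<in>{()}. sewing_const \<theta> * K * (Max A - Min A) powr \<theta>)"
        by (rule sewing_bound_powr[where lo = "p k" and hi = "p (Suc k)"])
          (use cell A K_nonneg exponent_gt1 in \<open>auto intro!: germ_diag germ_defect\<close>)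
      also have "\<dots> \<le> S * (Max A - Min A) * \<delta> powr (\<theta> - 1)"
        using span P(2) k K_nonneg exponent_gt1 sewing_const_pos[OF exponent_gt1]
        by (auto simp: S_def mult.assoc intro!: mult_left_mono powr_le_mult_powr)
      also have "\<dots> \<le> S * (p (Suc k) - p k) * \<delta> powr (\<theta> - 1)"
        using span S by (intro mult_right_mono mult_left_mono) auto
      finally show "\<bar>chain_sum Xi A - Xi (Min A) (Max A)\<bar> \<le> S * (p (Suc k) - p k) * \<delta> powr (\<theta> - 1)" .
    qed
    also have "\<dots> = S * \<delta> powr (\<theta> - 1) * (\<Sum>k<n. p (Suc k) - p k)"
      by (simp add: sum_distrib_left algebra_simps)
    also have "\<dots> = (2*pi*S) * \<delta> powr (\<theta> - 1)"
      by (simp add: sum_lessThan_telescope ends)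
    finally show ?thesis using \<delta>(3) by linarith
  qed
  then show ?thesis using \<delta>(1) that by blast
qed

lemma germ_sums_close:
  assumes "0 < \<epsilon>"
  obtains \<delta> where "0 < \<delta>"
    "\<And>n p m q. partition n p \<Longrightarrow> \<forall>k<n. p (Suc k) - p k \<le> \<delta> \<Longrightarrow>
       partition m q \<Longrightarrow> \<forall>k<m. q (Suc k) - q k \<le> \<delta> \<Longrightarrow> \<bar>germ_sum Xi n p - germ_sum Xi m q\<bar> \<le> 2 * \<epsilon>"
proof -
  obtain \<delta> where \<delta>: "0 < \<delta>" and near: "\<And>n p B. partition n p \<Longrightarrow> \<forall>k<n. p (Suc k) - p k \<le> \<delta> \<Longrightarrow>
      finite B \<Longrightarrow> p ` {0..n} \<subseteq> B \<Longrightarrow> B \<subseteq> {0..2*pi} \<Longrightarrow> \<bar>chain_sum Xi B - germ_sum Xi n p\<bar> \<le> \<epsilon>"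
    using chain_sum_near_germ_sum[OF assms] by blast
  have "\<bar>germ_sum Xi n p - germ_sum Xi m q\<bar> \<le> 2 * \<epsilon>"
    if P: "partition n p" "\<forall>k<n. p (Suc k) - p k \<le> \<delta>" "partition m q" "\<forall>k<m. q (Suc k) - q k \<le> \<delta>"
    for n p m q
  proof -
    define B where "B = p ` {0..n} \<union> q ` {0..m}"
    have B: "finite B" "p ` {0..n} \<subseteq> B" "q ` {0..m} \<subseteq> B" "B \<subseteq> {0..2*pi}"
      using partition_range[OF P(1)] partition_range[OF P(3)] by (auto simp: B_def)
    show ?thesis using near[OF P(1,2) B(1,2,4)] near[OF P(3,4) B(1,3,4)] by linarith
  qed
  then show ?thesis using \<delta> that by blast
qed

lemma germ_sum_near_uniform:
  assumes "0 < \<epsilon>"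
  obtains \<delta> M where "0 < \<delta>" "\<And>j. M \<le> j \<Longrightarrow> 2*pi / real (Suc j) \<le> \<delta>"
    "\<And>n p j. partition n p \<Longrightarrow> \<forall>k<n. p (Suc k) - p k \<le> \<delta> \<Longrightarrow> M \<le> j \<Longrightarrow>
       \<bar>germ_sum Xi n p - germ_sum Xi (Suc j) (uniform_partition j)\<bar> \<le> 2 * \<epsilon>"
proof -
  obtain \<delta> where \<delta>: "0 < \<delta>" and close: "\<And>n p m q. partition n p \<Longrightarrow> \<forall>k<n. p (Suc k) - p k \<le> \<delta> \<Longrightarrow>
     partition m q \<Longrightarrow> \<forall>k<m. q (Suc k) - q k \<le> \<delta> \<Longrightarrow> \<bar>germ_sum Xi n p - germ_sum Xi m q\<bar> \<le> 2 * \<epsilon>"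
    using germ_sums_close[OF assms] by blast
  obtain M where M: "\<And>j. M \<le> j \<Longrightarrow> 2*pi / real (Suc j) \<le> \<delta>" using uniform_partition_fine[OF \<delta>] by blast
  have "\<bar>germ_sum Xi n p - germ_sum Xi (Suc j) (uniform_partition j)\<bar> \<le> 2 * \<epsilon>"
    if "partition n p" "\<forall>k<n. p (Suc k) - p k \<le> \<delta>" "M \<le> j" for n p j
    using M[OF that(3)] by (intro close[OF that(1,2) partition_uniform_partition]) (simp add: uniform_partition_step)
  with \<delta> M that show ?thesis by blast
qed

lemma germ_limit_exists: "\<exists>I. germ_limit Xi I"
proof -
  define u where "u j = germ_sum Xi (Suc j) (uniform_partition j)" for j
  have "Cauchy u"
  proof (rule CauchyI)
    fix e :: real assume "0 < e"
    then have "0 < e/4" by simp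
    then obtain \<delta> M where "0 < \<delta>" and M: "\<And>j. M \<le> j \<Longrightarrow> 2*pi / real (Suc j) \<le> \<delta>"
      and near: "\<And>n p j. partition n p \<Longrightarrow> \<forall>k<n. p (Suc k) - p k \<le> \<delta> \<Longrightarrow> M \<le> j \<Longrightarrow>
        \<bar>germ_sum Xi n p - u j\<bar> \<le> 2 * (e/4)"
      using germ_sum_near_uniform unfolding u_def by blast
    show "\<exists>M. \<forall>m\<ge>M. \<forall>n\<ge>M. norm (u m - u n) < e"
    proof (intro exI allI impI)
      fix i j assume ij: "M \<le> i" "M \<le> j"
      then have "\<bar>u i - u j\<bar> \<le> 2 * (e/4)" unfolding u_def[of i]
        using M[OF ij(1)] by (intro near[OF partition_uniform_partition _ ij(2)]) (simp add: uniform_partition_step)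
      then show "norm (u i - u j) < e" using \<open>0 < e\<close> by simp
    qed
  qed
  then obtain I where I: "u \<longlonglongrightarrow> I" using Cauchy_convergent_iff convergent_def by blast
  have "germ_limit Xi I"
    unfolding germ_limit_def
  proof (intro allI impI)
    fix e :: real assume "0 < e"
    then have "0 < e/4" by simp
    then obtain \<delta> M where \<delta>: "0 < \<delta>" and "\<And>j. M \<le> j \<Longrightarrow> 2*pi / real (Suc j) \<le> \<delta>"
      and near: "\<And>n p j. partition n p \<Longrightarrow> \<forall>k<n. p (Suc k) - p k \<le> \<delta> \<Longrightarrow> M \<le> j \<Longrightarrow>
        \<bar>germ_sum Xi n p - u j\<bar> \<le> 2 * (e/4)"
      using germ_sum_near_uniform unfolding u_def by blast
    have "\<bar>germ_sum Xi n p - I\<bar> < e" if P: "partition n p" "mesh n p < \<delta>" for n p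
    proof -
      have "\<forall>k<n. p (Suc k) - p k \<le> \<delta>"
        using partition_step_le_mesh[of _ n p] P(2) by (meson less_imp_le order_trans)
      then have "\<forall>j\<ge>M. \<bar>germ_sum Xi n p - u j\<bar> \<le> 2 * (e/4)" using near P(1) by blast
      moreover have "(\<lambda>j. \<bar>germ_sum Xi n p - u j\<bar>) \<longlonglongrightarrow> \<bar>germ_sum Xi n p - I\<bar>" by (intro tendsto_intros I)
      ultimately have "\<bar>germ_sum Xi n p - I\<bar> \<le> 2 * (e/4)" using LIMSEQ_le_const2 by blast
      then show ?thesis using \<open>0 < e\<close> by simp
    qed
    then show "\<exists>\<delta>>0. \<forall>n p. partition n p \<and> mesh n p < \<delta> \<longrightarrow> \<bar>germ_sum Xi n p - I\<bar> < e" using \<delta> by blast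
  qed
  then show ?thesis by blast
qed

lemma germ_limit_bound:
  assumes I: "germ_limit Xi I" and E: "partition N e"
    and g: "\<And>k A. k < N \<Longrightarrow> finite A \<Longrightarrow> A \<noteq> {} \<Longrightarrow> A \<subseteq> {e k..e (Suc k)} \<Longrightarrow>
              \<bar>chain_sum Xi A - Xi (Min A) (Max A)\<bar> \<le> g k"
  shows "\<bar>I\<bar> \<le> \<bar>germ_sum Xi N e\<bar> + (\<Sum>k<N. g k)"
proof (rule field_le_epsilon)
  fix \<epsilon> :: real assume "0 < \<epsilon>"
  then obtain \<delta> where \<delta>: "0 < \<delta>" and near: "\<And>n p B. partition n p \<Longrightarrow> \<forall>k<n. p (Suc k) - p k \<le> \<delta> \<Longrightarrow>
      finite B \<Longrightarrow> p ` {0..n} \<subseteq> B \<Longrightarrow> B \<subseteq> {0..2*pi} \<Longrightarrow> \<bar>chain_sum Xi B - germ_sum Xi n p\<bar> \<le> \<epsilon>/2"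
    using chain_sum_near_germ_sum[OF half_gt_zero[OF \<open>0 < \<epsilon>\<close>]] by blast
  have "0 < \<epsilon>/2" using \<open>0 < \<epsilon>\<close> by simp
  from I[unfolded germ_limit_def, rule_format, OF this] obtain \<delta>' where \<delta>': "0 < \<delta>'"
    and lim: "\<forall>n p. partition n p \<and> mesh n p < \<delta>' \<longrightarrow> \<bar>germ_sum Xi n p - I\<bar> < \<epsilon>/2"
    by blast
  obtain M1 where M1: "\<And>j. M1 \<le> j \<Longrightarrow> 2*pi / real (Suc j) \<le> \<delta>"
    using uniform_partition_fine[OF \<delta>] by blast
  obtain M2 where M2: "\<And>j. M2 \<le> j \<Longrightarrow> 2*pi / real (Suc j) \<le> \<delta>'/2"
    using uniform_partition_fine[OF half_gt_zero[OF \<delta>']] by blast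
  define j where "j = max M1 M2"
  have j: "2*pi / real (Suc j) \<le> \<delta>" "2*pi / real (Suc j) < \<delta>'"
    using M1[of j] M2[of j] \<delta>' by (auto simp: j_def)
  define q where "q = uniform_partition j"
  have Q: "partition (Suc j) q" "\<forall>k<Suc j. q (Suc k) - q k \<le> \<delta>" "mesh (Suc j) q < \<delta>'"
    using partition_uniform_partition j by (simp_all add: q_def uniform_partition_step mesh_uniform_partition)
  define B where "B = q ` {0..Suc j} \<union> e ` {0..N}"
  have B: "finite B" "e ` {0..N} \<subseteq> B" "q ` {0..Suc j} \<subseteq> B" "B \<subseteq> {0..2*pi}"
    using partition_range[OF Q(1)] partition_range[OF E] by (auto simp: B_def)
  have inc: "\<forall>k<N. e k < e (Suc k)" and ends: "e 0 = 0" "e N = 2*pi"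
    using E unfolding partition_def by auto
  have "\<bar>chain_sum Xi B - germ_sum Xi N e\<bar> \<le> (\<Sum>k<N. g k)"
    unfolding germ_sum_def using B(4) ends by (intro chain_sum_refinement_bound[OF inc B(1,2) _ g]) simp_all
  moreover have "\<bar>chain_sum Xi B - germ_sum Xi (Suc j) q\<bar> \<le> \<epsilon>/2"
    by (rule near[OF Q(1,2) B(1,3,4)])
  moreover have "\<bar>germ_sum Xi (Suc j) q - I\<bar> < \<epsilon>/2" using lim Q(1,3) by blast
  ultimately show "\<bar>I\<bar> \<le> \<bar>germ_sum Xi N e\<bar> + (\<Sum>k<N. g k) + \<epsilon>" by linarith
qed

end

section \<open>Hoelder bounds for the rough germ\<close>

lemma abs_le_hnorm2:
  assumes "hfin2 \<alpha> G" "0 \<le> x" "x < 2*pi" "x < y" "y < x + 2*pi"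
  shows "\<bar>G x y\<bar> \<le> hnorm2 \<alpha> G * (y - x) powr \<alpha>"
proof -
  have "(x, y) \<in> hpairs" using assms by (simp add: hpairs_def)
  then have "\<bar>G x y\<bar> / (y - x) powr \<alpha> \<le> hnorm2 \<alpha> G"
    using assms(1) unfolding hnorm2_def hfin2_def hquot2_def by (force intro: cSup_upper)
  moreover have "0 < (y - x) powr \<alpha>" using assms by simp
  ultimately show ?thesis by (simp add: divide_le_eq)
qed

lemma hnorm2_nonneg:
  assumes "hfin2 \<alpha> G" shows "0 \<le> hnorm2 \<alpha> G"
proof -
  have "\<bar>G 0 1\<bar> \<le> hnorm2 \<alpha> G * (1 - 0) powr \<alpha>"
    using abs_le_hnorm2[OF assms, of 0 1] pi_gt3 by simp
  then show ?thesis by simp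
qed

lemma abs_le_hnorm2_powr:
  assumes "hfin2 \<alpha> G" "0 \<le> \<alpha>" "0 \<le> x" "x < 2*pi" "x < y" "y < x + 2*pi" "y - x \<le> l"
  shows "\<bar>G x y\<bar> \<le> hnorm2 \<alpha> G * l powr \<alpha>"
  using abs_le_hnorm2[OF assms(1,3-6)] hnorm2_nonneg[OF assms(1)] assms(2,5,7)
  by (meson mult_left_mono order_trans powr_mono2 diff_ge_0_iff_ge less_imp_le)

lemma hnorm_nonneg: "hfin \<alpha> X \<Longrightarrow> 0 \<le> hnorm \<alpha> X"
  unfolding hfin_def hnorm_def by (rule hnorm2_nonneg)

lemma abs_le_supnorm:
  assumes "supfin Y" "0 \<le> x" "x < 2*pi" shows "\<bar>Y x\<bar> \<le> supnorm Y"
  using assms unfolding supnorm_def supfin_def by (force intro: cSup_upper)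

lemma supnorm_nonneg: "supfin Y \<Longrightarrow> 0 \<le> supnorm Y"
  using abs_le_supnorm[of Y 0] by fastforce

lemma periodic_abs_le_hnorm:
  assumes "circ_periodic Y" "hfin \<alpha> Y" "0 < \<alpha>" "0 \<le> x" "x \<le> 2*pi"
  shows "\<bar>Y x\<bar> \<le> \<bar>Y 0\<bar> + hnorm \<alpha> Y * x powr \<alpha>"
proof -
  have h: "0 \<le> hnorm \<alpha> Y * x powr \<alpha>" using hnorm_nonneg[OF assms(2)] by simp
  consider "x = 0" | "0 < x" "x < 2*pi" | "x = 2*pi" using assms by linarith
  then show ?thesis
  proof cases
    case 2
    then have "\<bar>incr Y 0 x\<bar> \<le> hnorm \<alpha> Y * (x - 0) powr \<alpha>"
      using assms(2) unfolding hfin_def hnorm_def by (intro abs_le_hnorm2) auto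
    then show ?thesis by (simp add: incr_def)
  next
    case 3
    then have "Y x = Y 0" using assms(1) unfolding circ_periodic_def by (metis add_0)
    then show ?thesis using h by simp
  qed (use h in simp)
qed

lemma abs_mult3_le:
  fixes u v w U V W :: real
  assumes "\<bar>u\<bar> \<le> U" "\<bar>v\<bar> \<le> V" "\<bar>w\<bar> \<le> W"
  shows "\<bar>u * v * w\<bar> \<le> U * V * W"
  unfolding abs_mult using assms by (intro mult_mono) auto

(* The guard a < b makes the germ vanish on the whole diagonal (XX a a = 0 is only assumed for
   a < 2 pi); Riemann sums only evaluate it at pairs a < b. *)
definition rough_germ :: "(real \<Rightarrow> real) \<Rightarrow> (real \<Rightarrow> real) \<Rightarrow> (real \<Rightarrow> real) \<Rightarrow> (real \<Rightarrow> real \<Rightarrow> real)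
                          \<Rightarrow> real \<Rightarrow> real \<Rightarrow> real" where
  "rough_germ Z Z' X XX a b = (if a < b then Z a * incr X a b + Z' a * XX a b else 0)"

lemma has_rough_integral_iff_germ_limit:
  "has_rough_integral Z Z' X XX I \<longleftrightarrow> germ_limit (rough_germ Z Z' X XX) I"
proof -
  have "germ_sum (rough_germ Z Z' X XX) n p = rsum Z Z' X XX n p" if "partition n p" for n p
    using that unfolding germ_sum_def rsum_def rough_germ_def partition_def by (intro sum.cong) auto
  then show ?thesis unfolding has_rough_integral_def germ_limit_def by metis
qed

lemma rough_germ_defect_eq:
  assumes "rough_path X XX" "0 \<le> a" "a < b" "b < d" "b < 2*pi" "d < a + 2*pi"
  shows "rough_germ (\<lambda>x. F x * Y x) (\<lambda>x. F x * Y' x) X XX a d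
           - rough_germ (\<lambda>x. F x * Y x) (\<lambda>x. F x * Y' x) X XX a b
           - rough_germ (\<lambda>x. F x * Y x) (\<lambda>x. F x * Y' x) X XX b d
         = - F a * remainder Y Y' X a b * incr X b d - (F b - F a) * Y b * incr X b d
           - F a * incr Y' a b * XX b d - (F b - F a) * Y' b * XX b d"
proof -
  have "XX a d - XX a b - red2 XX b d = incr X a b * incr X b d"
    using assms unfolding rough_path_def by auto
  moreover have "red2 XX b d = XX b d"
  proof -
    have "\<lfloor>b / (2*pi)\<rfloor> = 0" using assms by (intro floor_unique) (auto simp: field_simps)
    then show ?thesis by (simp add: red2_def)
  qed
  ultimately have Chen: "XX a d = XX a b + XX b d + incr X a b * incr X b d" by simp
  show ?thesis
    using assms(3,4) by (simp add: Chen rough_germ_def incr_def remainder_def algebra_simps)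
qed

lemma rough_germ_defect_bound:
  fixes \<kappa> :: real
  assumes \<kappa>: "0 < \<kappa>" "\<kappa> < 1/2" and rp: "rough_path X XX"
    and hX: "hfin (1/2 - \<kappa>) X" and hXX: "hfin2 (1 - 2*\<kappa>) XX"
    and hY': "hfin (3*\<kappa>) Y'" "supfin Y'" and hR: "hfin2 (1/2 + 2*\<kappa>) (remainder Y Y' X)"
    and F: "\<And>x. lo \<le> x \<Longrightarrow> x \<le> hi \<Longrightarrow> \<bar>F x\<bar> \<le> MF"
    and F_lip: "\<And>u v. lo \<le> u \<Longrightarrow> u \<le> v \<Longrightarrow> v \<le> hi \<Longrightarrow> \<bar>F v - F u\<bar> \<le> LF * (v - u)" "0 \<le> LF"
    and Y: "\<And>x. lo \<le> x \<Longrightarrow> x \<le> hi \<Longrightarrow> \<bar>Y x\<bar> \<le> MY"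
    and abd: "0 \<le> lo" "hi \<le> 2*pi" "lo \<le> a" "a \<le> b" "b \<le> d" "d \<le> hi" "d < a + 2*pi"
  shows "\<bar>rough_germ (\<lambda>x. F x * Y x) (\<lambda>x. F x * Y' x) X XX a d
          - rough_germ (\<lambda>x. F x * Y x) (\<lambda>x. F x * Y' x) X XX a b
          - rough_germ (\<lambda>x. F x * Y x) (\<lambda>x. F x * Y' x) X XX b d\<bar>
    \<le> MF * (hnorm2 (1/2 + 2*\<kappa>) (remainder Y Y' X) * hnorm (1/2 - \<kappa>) X
            + hnorm (3*\<kappa>) Y' * hnorm2 (1 - 2*\<kappa>) XX) * (d - a) powr (1 + \<kappa>)
      + LF * MY * hnorm (1/2 - \<kappa>) X * (d - a) powr (3/2 - \<kappa>)
      + LF * supnorm Y' * hnorm2 (1 - 2*\<kappa>) XX * (d - a) powr (2 - 2*\<kappa>)"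
    (is "\<bar>?\<delta>\<bar> \<le> ?R")
proof -
  define hr where "hr = hnorm2 (1/2 + 2*\<kappa>) (remainder Y Y' X)"
  define hx where "hx = hnorm (1/2 - \<kappa>) X"
  define hy' where "hy' = hnorm (3*\<kappa>) Y'"
  define hxx where "hxx = hnorm2 (1 - 2*\<kappa>) XX"
  define sy' where "sy' = supnorm Y'"
  define l where "l = d - a"
  have nonneg: "0 \<le> hr" "0 \<le> hx" "0 \<le> hy'" "0 \<le> hxx" "0 \<le> sy'" "0 \<le> MF" "0 \<le> MY" "0 \<le> l"
    using hnorm2_nonneg[OF hR] hnorm_nonneg[OF hX] hnorm_nonneg[OF hY'(1)] hnorm2_nonneg[OF hXX]
      supnorm_nonneg[OF hY'(2)] F[of a] Y[of a] abd
    by (auto simp: hr_def hx_def hy'_def hxx_def sy'_def l_def)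
  show ?thesis
  proof (cases "a < b \<and> b < d")
    case False
    then have "?\<delta> = 0" using abd by (auto simp: rough_germ_def)
    moreover have "0 \<le> ?R" using nonneg F_lip(2) unfolding l_def
      by (simp add: hr_def hx_def hy'_def hxx_def sy'_def)
    ultimately show ?thesis by simp
  next
    case True
    then have ab: "a < b" and bd: "b < d" by auto
    have ranges: "0 \<le> a" "a < 2*pi" "b < a + 2*pi" "0 \<le> b" "b < 2*pi" "d < b + 2*pi" "b - a \<le> l" "d - b \<le> l"
      using abd ab bd by (auto simp: l_def)
    have R_ab: "\<bar>remainder Y Y' X a b\<bar> \<le> hr * l powr (1/2 + 2*\<kappa>)"
      unfolding hr_def using \<kappa> ranges ab by (intro abs_le_hnorm2_powr[OF hR]) auto
    have X_bd: "\<bar>incr X b d\<bar> \<le> hx * l powr (1/2 - \<kappa>)"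
      unfolding hx_def hnorm_def using \<kappa> ranges bd hX unfolding hfin_def
      by (intro abs_le_hnorm2_powr) auto
    have Y'_ab: "\<bar>incr Y' a b\<bar> \<le> hy' * l powr (3*\<kappa>)"
      unfolding hy'_def hnorm_def using \<kappa> ranges ab hY'(1) unfolding hfin_def
      by (intro abs_le_hnorm2_powr) auto
    have XX_bd: "\<bar>XX b d\<bar> \<le> hxx * l powr (1 - 2*\<kappa>)"
      unfolding hxx_def using \<kappa> ranges bd by (intro abs_le_hnorm2_powr[OF hXX]) auto
    have Y'_b: "\<bar>Y' b\<bar> \<le> sy'" unfolding sy'_def using ranges by (intro abs_le_supnorm[OF hY'(2)])
    have F_a: "\<bar>F a\<bar> \<le> MF" and F_ba: "\<bar>F b - F a\<bar> \<le> LF * l" and Y_b: "\<bar>Y b\<bar> \<le> MY"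
      using F[of a] F_lip(1)[of a b] mult_left_mono[OF ranges(7) F_lip(2)] Y[of b] abd ab bd by auto
    have "\<bar>?\<delta>\<bar> \<le> \<bar>F a * remainder Y Y' X a b * incr X b d\<bar> + \<bar>(F b - F a) * Y b * incr X b d\<bar>
        + \<bar>F a * incr Y' a b * XX b d\<bar> + \<bar>(F b - F a) * Y' b * XX b d\<bar>"
      unfolding rough_germ_defect_eq[OF rp ranges(1) ab bd ranges(5) abd(7)] by linarith
    also have "\<dots> \<le> MF * (hr * l powr (1/2 + 2*\<kappa>)) * (hx * l powr (1/2 - \<kappa>))
        + LF * l * MY * (hx * l powr (1/2 - \<kappa>))
        + MF * (hy' * l powr (3*\<kappa>)) * (hxx * l powr (1 - 2*\<kappa>))
        + LF * l * sy' * (hxx * l powr (1 - 2*\<kappa>))"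
      using abs_mult3_le[OF F_a R_ab X_bd] abs_mult3_le[OF F_ba Y_b X_bd]
        abs_mult3_le[OF F_a Y'_ab XX_bd] abs_mult3_le[OF F_ba Y'_b XX_bd] by linarith
    also have "\<dots> = ?R"
    proof -
      have "l powr (1/2 + 2*\<kappa>) * l powr (1/2 - \<kappa>) = l powr (1 + \<kappa>)"
        "l powr (3*\<kappa>) * l powr (1 - 2*\<kappa>) = l powr (1 + \<kappa>)"
        by (simp_all add: powr_add[symmetric] algebra_simps)
      moreover have "l * l powr (1/2 - \<kappa>) = l powr (3/2 - \<kappa>)" "l * l powr (1 - 2*\<kappa>) = l powr (2 - 2*\<kappa>)"
        using powr_mult_base[OF nonneg(8)] by simp_all
      ultimately show ?thesis
        unfolding hr_def[symmetric] hx_def[symmetric] hy'_def[symmetric] hxx_def[symmetric]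
          sy'_def[symmetric] l_def[symmetric]
        by (simp add: algebra_simps)
    qed
    finally show ?thesis .
  qed
qed

section \<open>The oscillating integrand\<close>

lemma C1_deriv: "C1 f \<Longrightarrow> (f has_real_derivative deriv f x) (at x)"
  using DERIV_deriv_iff_real_differentiable unfolding C1_def by blast

lemma C1_continuous_on:
  assumes "C1 f" shows "continuous_on S (\<lambda>x. \<bar>f x\<bar> + \<bar>deriv f x\<bar>)"
proof (intro continuous_at_imp_continuous_on ballI)
  fix x
  have "isCont f x" using C1_deriv[OF assms] DERIV_isCont by blast
  moreover have "isCont (deriv f) x"
    using assms unfolding C1_def by (simp add: continuous_on_eq_continuous_at)
  ultimately show "isCont (\<lambda>x. \<bar>f x\<bar> + \<bar>deriv f x\<bar>) x" by (intro continuous_intros)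
qed

lemma C1_bounded_on:
  assumes "C1 f" obtains M where "\<And>x. lo \<le> x \<Longrightarrow> x \<le> hi \<Longrightarrow> \<bar>f x\<bar> + \<bar>deriv f x\<bar> \<le> M"
proof -
  have "compact ((\<lambda>x. \<bar>f x\<bar> + \<bar>deriv f x\<bar>) ` {lo..hi})"
    using C1_continuous_on[OF assms] by (intro compact_continuous_image) auto
  then obtain M where "\<forall>y \<in> (\<lambda>x. \<bar>f x\<bar> + \<bar>deriv f x\<bar>) ` {lo..hi}. y \<le> M"
    using bounded_imp_bdd_above compact_imp_bounded unfolding bdd_above_def by blast
  then show ?thesis by (intro that) auto
qed

lemma C1_scaled_bounds:
  assumes f: "C1 f" and lam: "0 < lam"
    and M: "\<And>x. r \<le> x \<Longrightarrow> x \<le> s \<Longrightarrow> \<bar>f x\<bar> + \<bar>deriv f x\<bar> \<le> M"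
  shows "r \<le> lam * u \<Longrightarrow> lam * u \<le> s \<Longrightarrow> \<bar>f (lam * u)\<bar> \<le> M"
    and "r \<le> lam * u \<Longrightarrow> u \<le> v \<Longrightarrow> lam * v \<le> s \<Longrightarrow> \<bar>f (lam * v) - f (lam * u)\<bar> \<le> lam * M * (v - u)"
proof -
  show "\<bar>f (lam * u)\<bar> \<le> M" if "r \<le> lam * u" "lam * u \<le> s"
    using M[OF that] by simp
  assume uv: "r \<le> lam * u" "u \<le> v" "lam * v \<le> s"
  show "\<bar>f (lam * v) - f (lam * u)\<bar> \<le> lam * M * (v - u)"
  proof (cases "u = v")
    case False
    then have "lam * u < lam * v" using uv lam by simp
    then obtain z where z: "lam * u < z" "z < lam * v" "f (lam * v) - f (lam * u) = (lam * v - lam * u) * deriv f z"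
      using MVT2[of "lam * u" "lam * v" f "deriv f"] C1_deriv[OF f] by blast
    have "\<bar>deriv f z\<bar> \<le> M" using M[of z] z uv by simp
    have "\<bar>f (lam * v) - f (lam * u)\<bar> = \<bar>lam * v - lam * u\<bar> * \<bar>deriv f z\<bar>"
      using z by (simp add: abs_mult)
    also have "\<dots> \<le> (lam * (v - u)) * M"
      using \<open>\<bar>deriv f z\<bar> \<le> M\<close> uv lam by (intro mult_mono) (auto simp: algebra_simps)
    finally show ?thesis by (simp add: algebra_simps)
  qed simp
qed

definition unit_sup :: "(real \<Rightarrow> real) \<Rightarrow> real \<Rightarrow> real" where
  "unit_sup f r = Sup ((\<lambda>t. \<bar>f (r + t)\<bar> + \<bar>deriv f (r + t)\<bar>) ` {0..1})"

lemma unit_sup_ge: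
  assumes "C1 f" "r \<le> x" "x \<le> r + 1"
  shows "\<bar>f x\<bar> + \<bar>deriv f x\<bar> \<le> unit_sup f r"
proof -
  let ?g = "\<lambda>t. \<bar>f (r + t)\<bar> + \<bar>deriv f (r + t)\<bar>"
  have "continuous_on {0..1} ((\<lambda>x. \<bar>f x\<bar> + \<bar>deriv f x\<bar>) \<circ> (\<lambda>t. r + t))"
    by (intro continuous_on_compose continuous_intros C1_continuous_on assms(1))
  then have "compact (?g ` {0..1})" by (intro compact_continuous_image) (simp_all add: o_def)
  then have "bdd_above (?g ` {0..1})" by (intro bounded_imp_bdd_above compact_imp_bounded)
  moreover have "?g (x - r) \<in> ?g ` {0..1}" using assms by (intro imageI) auto
  ultimately have "?g (x - r) \<le> unit_sup f r" unfolding unit_sup_def by (rule cSup_upper[rotated])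
  then show ?thesis by simp
qed

lemma unit_sup_nonneg:
  assumes "C1 f" shows "0 \<le> unit_sup f r"
proof -
  have "\<bar>f r\<bar> + \<bar>deriv f r\<bar> \<le> unit_sup f r" using unit_sup_ge[OF assms] by simp
  moreover have "0 \<le> \<bar>f r\<bar> + \<bar>deriv f r\<bar>" by simp
  ultimately show ?thesis by linarith
qed

lemma tseq_of_nat: "tseq f (int k) = sqrt (1 + real k) * unit_sup f (real k)"
  by (simp add: tseq_def unit_sup_def)

lemma sum_tseq_le_triple:
  assumes "C1 f" "triple_finite f"
  shows "(\<Sum>k<N. tseq f (int k)) \<le> triple f"
proof -
  have "0 \<le> tseq f n" for n
    unfolding tseq_def using unit_sup_nonneg[OF assms(1), of "real_of_int n"] by (simp add: unit_sup_def)
  then have "sum (tseq f) (int ` {..<N}) \<le> infsum (tseq f) UNIV"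
    using assms(2) unfolding triple_finite_def by (intro finite_sum_le_infsum) auto
  then show ?thesis by (simp add: triple_def sum.reindex)
qed

lemma powr_le_scaled:
  fixes lam x c \<theta> :: real
  assumes "0 < lam" "0 \<le> x" "x \<le> c / lam" "0 \<le> \<theta>"
  shows "x powr \<theta> \<le> c powr \<theta> * lam powr (- \<theta>)"
proof -
  have "0 \<le> c / lam" using assms(2,3) by linarith
  then have "0 \<le> c" using assms(1) by (simp add: zero_le_divide_iff)
  have "x powr \<theta> \<le> (c / lam) powr \<theta>" using assms by (intro powr_mono2) auto
  also have "\<dots> = c powr \<theta> * lam powr (- \<theta>)"
    using \<open>0 \<le> c\<close> assms(1) by (simp add: powr_divide powr_minus_divide)
  finally show ?thesis .
qed

lemma partition_scaled_grid:
  fixes L :: real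
  assumes "0 < L"
  shows "partition (nat \<lceil>2*pi*L\<rceil>) (\<lambda>k. min (real k / L) (2*pi))"
    and "k < nat \<lceil>2*pi*L\<rceil> \<Longrightarrow> real k / L < 2*pi"
proof -
  have N: "real (nat \<lceil>2*pi*L\<rceil>) = of_int \<lceil>2*pi*L\<rceil>" "2*pi*L \<le> of_int \<lceil>2*pi*L\<rceil>"
    "of_int \<lceil>2*pi*L\<rceil> < 2*pi*L + 1"
    using assms ceiling_correct[of "2*pi*L"] by auto
  show below: "real k / L < 2*pi" if "k < nat \<lceil>2*pi*L\<rceil>" for k
  proof -
    have "real k + 1 \<le> real (nat \<lceil>2*pi*L\<rceil>)" using that by linarith
    then have "real k < 2*pi*L" using N by linarith
    then show ?thesis using assms by (simp add: divide_less_eq mult.commute)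
  qed
  have "0 < 2*pi*L" using assms by simp
  then have "1 \<le> nat \<lceil>2*pi*L\<rceil>" by (simp add: Suc_le_eq)
  moreover have "2*pi \<le> real (nat \<lceil>2*pi*L\<rceil>) / L"
    using N assms by (simp add: le_divide_eq mult.commute)
  moreover have "min (real k / L) (2*pi) < min (real (Suc k) / L) (2*pi)" if "k < nat \<lceil>2*pi*L\<rceil>" for k
    using below[OF that] assms by (simp add: divide_strict_right_mono)
  ultimately show "partition (nat \<lceil>2*pi*L\<rceil>) (\<lambda>k. min (real k / L) (2*pi))"
    unfolding partition_def by simp
qed

definition rough_bound :: "real \<Rightarrow> real \<Rightarrow> (real \<Rightarrow> real) \<Rightarrow> (real \<Rightarrow> real) \<Rightarrow> (real \<Rightarrow> real)
                           \<Rightarrow> (real \<Rightarrow> real \<Rightarrow> real) \<Rightarrow> real" where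
  "rough_bound \<kappa> lam Y Y' X XX =
     lam powr (\<kappa> - 1/2) * \<bar>Y 0\<bar> * hnorm (1/2 - \<kappa>) X + lam powr (2*\<kappa> - 1) * Kkappa \<kappa> Y Y' X XX"

definition scaled_germ :: "(real \<Rightarrow> real) \<Rightarrow> real \<Rightarrow> (real \<Rightarrow> real) \<Rightarrow> (real \<Rightarrow> real) \<Rightarrow> (real \<Rightarrow> real)
                           \<Rightarrow> (real \<Rightarrow> real \<Rightarrow> real) \<Rightarrow> real \<Rightarrow> real \<Rightarrow> real" where
  "scaled_germ f lam Y Y' X XX = rough_germ (\<lambda>x. f (lam * x) * Y x) (\<lambda>x. f (lam * x) * Y' x) X XX"

context
  fixes \<kappa> lam :: real and f X Y Y' :: "real \<Rightarrow> real" and XX :: "real \<Rightarrow> real \<Rightarrow> real"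
  assumes \<kappa>: "0 < \<kappa>" "\<kappa> < 1/2" and f: "C1 f" and lam: "1 \<le> lam" and rp: "rough_path X XX"
    and Y_periodic: "circ_periodic Y"
    and hX: "hfin (1/2 - \<kappa>) X" and hY: "hfin (1/2 - \<kappa>) Y" and hXX: "hfin2 (1 - 2*\<kappa>) XX"
    and hY': "hfin (3*\<kappa>) Y'" "supfin Y'" and hR: "hfin2 (1/2 + 2*\<kappa>) (remainder Y Y' X)"
begin

lemma rough_bound_ge:
  assumes "1 \<le> r"
  shows "(hnorm2 (1/2 + 2*\<kappa>) (remainder Y Y' X) * hnorm (1/2 - \<kappa>) X
            + hnorm (3*\<kappa>) Y' * hnorm2 (1 - 2*\<kappa>) XX) * lam powr (2*\<kappa> - 1)
           \<le> r * rough_bound \<kappa> lam Y Y' X XX"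
    and "(\<bar>Y 0\<bar> + hnorm (1/2 - \<kappa>) Y * r * lam powr (\<kappa> - 1/2)) * hnorm (1/2 - \<kappa>) X * lam powr (\<kappa> - 1/2)
            + supnorm Y' * hnorm2 (1 - 2*\<kappa>) XX * lam powr (2*\<kappa> - 1)
           \<le> r * rough_bound \<kappa> lam Y Y' X XX"
proof -
  define hx hy hxx hr hy' sy' L1 L2 where "hx = hnorm (1/2 - \<kappa>) X" "hy = hnorm (1/2 - \<kappa>) Y"
    "hxx = hnorm2 (1 - 2*\<kappa>) XX" "hr = hnorm2 (1/2 + 2*\<kappa>) (remainder Y Y' X)" "hy' = hnorm (3*\<kappa>) Y'"
    "sy' = supnorm Y'" "L1 = lam powr (\<kappa> - 1/2)" "L2 = lam powr (2*\<kappa> - 1)"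
  have nonneg: "0 \<le> hx" "0 \<le> hy" "0 \<le> hxx" "0 \<le> hr" "0 \<le> hy'" "0 \<le> sy'" "0 \<le> L1" "0 \<le> L2"
    using hnorm_nonneg[OF hX] hnorm_nonneg[OF hY] hnorm2_nonneg[OF hXX] hnorm2_nonneg[OF hR]
      hnorm_nonneg[OF hY'(1)] supnorm_nonneg[OF hY'(2)]
    unfolding hx_hy_hxx_hr_hy'_sy'_L1_L2_def by auto
  have L: "L1 * L1 = L2" unfolding hx_hy_hxx_hr_hy'_sy'_L1_L2_def
    using lam by (simp add: powr_add[symmetric])
  have W: "rough_bound \<kappa> lam Y Y' X XX = L1 * \<bar>Y 0\<bar> * hx + L2 * (hy * hx + hxx * (hy' + sy') + hr * hx)"
    unfolding rough_bound_def Kkappa_def cnorm_def hx_hy_hxx_hr_hy'_sy'_L1_L2_def ..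
  have grow: "t \<le> r * t" if "0 \<le> t" for t using assms that by (simp add: mult_le_cancel_right1)
  have "(hr * hx + hy' * hxx) * L2 \<le> L2 * (hy * hx + hxx * (hy' + sy') + hr * hx)"
    using nonneg by (simp add: algebra_simps mult_nonneg_nonneg add_increasing)
  also have "\<dots> \<le> r * rough_bound \<kappa> lam Y Y' X XX"
    unfolding W using grow[of "L1 * \<bar>Y 0\<bar> * hx + L2 * (hy * hx + hxx * (hy' + sy') + hr * hx)"] nonneg
    by (smt (verit) mult_nonneg_nonneg mult_left_mono)
  finally show "(hr * hx + hy' * hxx) * L2 \<le> r * rough_bound \<kappa> lam Y Y' X XX"
    unfolding hx_hy_hxx_hr_hy'_sy'_L1_L2_def .
  have "(\<bar>Y 0\<bar> + hy * r * L1) * hx * L1 + sy' * hxx * L2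
      = L1 * \<bar>Y 0\<bar> * hx + r * (L2 * hy * hx) + L2 * hxx * sy'"
    by (simp add: L[symmetric] algebra_simps)
  also have "\<dots> \<le> r * (L1 * \<bar>Y 0\<bar> * hx) + r * (L2 * hy * hx) + r * (L2 * hxx * (hy' + sy') + L2 * hr * hx)"
    using grow[of "L1 * \<bar>Y 0\<bar> * hx"] grow[of "L2 * hxx * (hy' + sy') + L2 * hr * hx"] nonneg
    by (smt (verit) mult_left_mono mult_nonneg_nonneg)
  also have "\<dots> = r * rough_bound \<kappa> lam Y Y' X XX" unfolding W by (simp add: algebra_simps)
  finally show "(\<bar>Y 0\<bar> + hy * r * L1) * hx * L1 + sy' * hxx * L2 \<le> r * rough_bound \<kappa> lam Y Y' X XX"
    unfolding hx_hy_hxx_hr_hy'_sy'_L1_L2_def .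
qed

lemma scaled_cell_bounds:
  assumes x: "real k / lam \<le> x" "x \<le> real (Suc k) / lam" "x \<le> 2*pi"
  shows "\<bar>f (lam * x)\<bar> \<le> unit_sup f (real k)"
    and "\<bar>Y x\<bar> \<le> \<bar>Y 0\<bar> + hnorm (1/2 - \<kappa>) Y * sqrt (1 + real k) * lam powr (\<kappa> - 1/2)"
proof -
  have "real k \<le> lam * x" "lam * x \<le> real k + 1" using x lam by (auto simp: field_simps)
  then show "\<bar>f (lam * x)\<bar> \<le> unit_sup f (real k)" using unit_sup_ge[OF f] by fastforce
  have x0: "0 \<le> x" using x(1) lam by (meson divide_nonneg_nonneg of_nat_0_le_iff order_trans zero_le_one)
  have "x powr (1/2 - \<kappa>) \<le> (1 + real k) powr (1/2 - \<kappa>) * lam powr (- (1/2 - \<kappa>))"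
    using x lam \<kappa> x0 by (intro powr_le_scaled) (auto simp: add.commute)
  also have "(1 + real k) powr (1/2 - \<kappa>) \<le> (1 + real k) powr (1/2)" using \<kappa> by (intro powr_mono) auto
  finally have "x powr (1/2 - \<kappa>) \<le> sqrt (1 + real k) * lam powr (\<kappa> - 1/2)"
    by (simp add: powr_half_sqrt mult_right_mono)
  then show "\<bar>Y x\<bar> \<le> \<bar>Y 0\<bar> + hnorm (1/2 - \<kappa>) Y * sqrt (1 + real k) * lam powr (\<kappa> - 1/2)"
    using periodic_abs_le_hnorm[OF Y_periodic hY _ x0 x(3)] \<kappa> hnorm_nonneg[OF hY]
    by (smt (verit) mult.assoc mult_left_mono)
qed

lemma scaled_cell_lipschitz:
  assumes "real k / lam \<le> u" "u \<le> v" "v \<le> real (Suc k) / lam"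
  shows "\<bar>f (lam * v) - f (lam * u)\<bar> \<le> lam * unit_sup f (real k) * (v - u)"
proof (rule C1_scaled_bounds(2)[OF f _ unit_sup_ge[OF f]])
  show "0 < lam" "real k \<le> lam * u" "u \<le> v" "lam * v \<le> real k + 1"
    using assms lam by (auto simp: field_simps)
qed

(* On intervals of length at most 1 the three exponents can be replaced by the smallest one. *)
lemma scaled_germ_defect:
  obtains K where "0 \<le> K"
    "\<And>a b d. 0 \<le> a \<Longrightarrow> a \<le> b \<Longrightarrow> b \<le> d \<Longrightarrow> d \<le> 2*pi \<Longrightarrow> d - a \<le> 1 \<Longrightarrow>
       \<bar>scaled_germ f lam Y Y' X XX a d
        - scaled_germ f lam Y Y' X XX a b
        - scaled_germ f lam Y Y' X XX b d\<bar>
       \<le> K * (d - a) powr (1 + min \<kappa> (1/2 - \<kappa>))"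
proof -
  obtain M where M: "\<And>x. 0 \<le> x \<Longrightarrow> x \<le> 2*pi*lam \<Longrightarrow> \<bar>f x\<bar> + \<bar>deriv f x\<bar> \<le> M"
    using C1_bounded_on[OF f] by blast
  have M0: "0 \<le> M" using M[of 0] lam by (smt (verit) abs_ge_zero mult_nonneg_nonneg pi_ge_zero)
  define MY where "MY = \<bar>Y 0\<bar> + hnorm (1/2 - \<kappa>) Y * (2*pi) powr (1/2 - \<kappa>)"
  define Q where "Q = hnorm2 (1/2 + 2*\<kappa>) (remainder Y Y' X) * hnorm (1/2 - \<kappa>) X
                      + hnorm (3*\<kappa>) Y' * hnorm2 (1 - 2*\<kappa>) XX"
  define A where "A = [M * Q, lam * M * MY * hnorm (1/2 - \<kappa>) X, lam * M * supnorm Y' * hnorm2 (1 - 2*\<kappa>) XX]"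
  define \<theta> where "\<theta> = [1 + \<kappa>, 3/2 - \<kappa>, 2 - 2*\<kappa>]"
  have A: "0 \<le> A ! i" and \<theta>: "1 + min \<kappa> (1/2 - \<kappa>) \<le> \<theta> ! i" if "i < 3" for i
    using that M0 lam \<kappa> hnorm_nonneg[OF hY] hnorm_nonneg[OF hX] hnorm_nonneg[OF hY'(1)] supnorm_nonneg[OF hY'(2)]
      hnorm2_nonneg[OF hXX] hnorm2_nonneg[OF hR]
    by (auto simp: A_def \<theta>_def MY_def Q_def less_Suc_eq numeral_3_eq_3)
  have "\<bar>scaled_germ f lam Y Y' X XX a d
        - scaled_germ f lam Y Y' X XX a b
        - scaled_germ f lam Y Y' X XX b d\<bar>
       \<le> sum_list A * (d - a) powr (1 + min \<kappa> (1/2 - \<kappa>))"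
    if abd: "0 \<le> a" "a \<le> b" "b \<le> d" "d \<le> 2*pi" "d - a \<le> 1" for a b d
  proof -
    have Y: "\<bar>Y x\<bar> \<le> MY" if "0 \<le> x" "x \<le> 2*pi" for x
      using periodic_abs_le_hnorm[OF Y_periodic hY _ that] \<kappa> hnorm_nonneg[OF hY] that
      unfolding MY_def by (smt (verit) mult_left_mono powr_mono2)
    have "\<bar>scaled_germ f lam Y Y' X XX a d
        - scaled_germ f lam Y Y' X XX a b
        - scaled_germ f lam Y Y' X XX b d\<bar>
        \<le> (\<Sum>i<3. A ! i * (d - a) powr (\<theta> ! i))"
      using rough_germ_defect_bound[OF \<kappa> rp hX hXX hY' hR, where F = "\<lambda>x. f (lam * x)" and lo = 0
          and hi = "2*pi" and MF = M and LF = "lam * M" and MY = MY, OF _ _ _ Y _ _ abd(1-4)]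
        C1_scaled_bounds[OF f _ M, of lam] lam M0 abd pi_gt3
      unfolding scaled_germ_def by (simp add: A_def \<theta>_def Q_def eval_nat_numeral algebra_simps)
    also have "\<dots> \<le> (\<Sum>i<3. A ! i * (d - a) powr (1 + min \<kappa> (1/2 - \<kappa>)))"
      using A \<theta> abd by (intro sum_mono mult_left_mono powr_mono') auto
    also have "\<dots> = sum_list A * (d - a) powr (1 + min \<kappa> (1/2 - \<kappa>))"
      by (simp add: A_def eval_nat_numeral algebra_simps)
    finally show ?thesis .
  qed
  moreover have "0 \<le> sum_list A" using A[of 0] A[of 1] A[of 2] by (simp add: A_def)
  ultimately show ?thesis using that by blast
qed

lemma scaled_germ_cell_terms:
  assumes l: "0 \<le> l" "l \<le> 1 / lam" and r: "1 \<le> r" and m: "0 \<le> m"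
  shows "m * (hnorm2 (1/2 + 2*\<kappa>) (remainder Y Y' X) * hnorm (1/2 - \<kappa>) X
              + hnorm (3*\<kappa>) Y' * hnorm2 (1 - 2*\<kappa>) XX) * l powr (1 + \<kappa>)
           \<le> m * (r * rough_bound \<kappa> lam Y Y' X XX)" (is "m * ?Q * _ \<le> _")
    and "lam * m * (\<bar>Y 0\<bar> + hnorm (1/2 - \<kappa>) Y * r * lam powr (\<kappa> - 1/2)) * hnorm (1/2 - \<kappa>) X
           * l powr (3/2 - \<kappa>) \<le> m * (r * rough_bound \<kappa> lam Y Y' X XX)" (is "lam * m * ?Y * ?hx * _ \<le> _")
    and "lam * m * supnorm Y' * hnorm2 (1 - 2*\<kappa>) XX * l powr (2 - 2*\<kappa>)
           \<le> m * (r * rough_bound \<kappa> lam Y Y' X XX)" (is "lam * m * ?sy' * ?hxx * _ \<le> _")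
proof -
  have lam0: "0 < lam" using lam by simp
  have pw: "l powr \<theta> \<le> lam powr (- \<theta>)" if "0 \<le> \<theta>" for \<theta>
    using powr_le_scaled[OF lam0 l, of \<theta>] that by simp
  have scale: "lam * lam powr (- \<theta>) = lam powr (1 - \<theta>)" for \<theta>
    using powr_mult_base[of lam "- \<theta>"] lam0 by simp
  have nonneg: "0 \<le> ?Q" "0 \<le> ?Y" "0 \<le> ?hx" "0 \<le> ?sy'" "0 \<le> ?hxx"
    using hnorm_nonneg[OF hX] hnorm_nonneg[OF hY] hnorm2_nonneg[OF hXX] hnorm2_nonneg[OF hR]
      hnorm_nonneg[OF hY'(1)] supnorm_nonneg[OF hY'(2)] r by auto
  have "l powr (1 + \<kappa>) \<le> lam powr (2*\<kappa> - 1)"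
    using pw[of "1 + \<kappa>"] powr_mono[of "- (1 + \<kappa>)" "2*\<kappa> - 1" lam] \<kappa> lam by simp
  then have "m * ?Q * l powr (1 + \<kappa>) \<le> m * (?Q * lam powr (2*\<kappa> - 1))"
    using m nonneg by (simp add: mult.assoc mult_left_mono)
  also have "\<dots> \<le> m * (r * rough_bound \<kappa> lam Y Y' X XX)"
    using rough_bound_ge(1)[OF r] m by (intro mult_left_mono) auto
  finally show "m * ?Q * l powr (1 + \<kappa>) \<le> m * (r * rough_bound \<kappa> lam Y Y' X XX)" .
  have L1: "lam * lam powr (- (3/2 - \<kappa>)) = lam powr (\<kappa> - 1/2)"
    and L2: "lam * lam powr (- (2 - 2*\<kappa>)) = lam powr (2*\<kappa> - 1)"
    using scale[of "3/2 - \<kappa>"] scale[of "2 - 2*\<kappa>"] by (simp_all add: algebra_simps)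
  have bound: "?Y * ?hx * lam powr (\<kappa> - 1/2) + ?sy' * ?hxx * lam powr (2*\<kappa> - 1)
      \<le> r * rough_bound \<kappa> lam Y Y' X XX"
    using rough_bound_ge(2)[OF r] by (simp add: algebra_simps)
  have "0 \<le> ?Y * ?hx * lam powr (\<kappa> - 1/2)" "0 \<le> ?sy' * ?hxx * lam powr (2*\<kappa> - 1)"
    using nonneg by simp_all
  then have Y_term: "?Y * ?hx * lam powr (\<kappa> - 1/2) \<le> r * rough_bound \<kappa> lam Y Y' X XX"
    and X_term: "?sy' * ?hxx * lam powr (2*\<kappa> - 1) \<le> r * rough_bound \<kappa> lam Y Y' X XX"
    using bound by linarith+
  have "lam * m * ?Y * ?hx * l powr (3/2 - \<kappa>) \<le> m * (?Y * ?hx * (lam * lam powr (- (3/2 - \<kappa>))))"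
    using pw[of "3/2 - \<kappa>"] \<kappa> m nonneg lam0
    by (simp add: mult.assoc mult.left_commute mult_left_mono)
  also have "\<dots> \<le> m * (r * rough_bound \<kappa> lam Y Y' X XX)"
    unfolding L1 using Y_term m by (intro mult_left_mono) auto
  finally show "lam * m * ?Y * ?hx * l powr (3/2 - \<kappa>) \<le> m * (r * rough_bound \<kappa> lam Y Y' X XX)" .
  have "lam * m * ?sy' * ?hxx * l powr (2 - 2*\<kappa>) \<le> m * (?sy' * ?hxx * (lam * lam powr (- (2 - 2*\<kappa>))))"
    using pw[of "2 - 2*\<kappa>"] \<kappa> m nonneg lam0
    by (simp add: mult.assoc mult.left_commute mult_left_mono)
  also have "\<dots> \<le> m * (r * rough_bound \<kappa> lam Y Y' X XX)"
    unfolding L2 using X_term m by (intro mult_left_mono) auto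
  finally show "lam * m * ?sy' * ?hxx * l powr (2 - 2*\<kappa>) \<le> m * (r * rough_bound \<kappa> lam Y Y' X XX)" .
qed

lemma scaled_cell:
  assumes "real k / lam < 2*pi"
  defines "b \<equiv> min (real (Suc k) / lam) (2*pi)"
  shows "0 \<le> real k / lam" "real k / lam < b" "b \<le> real (Suc k) / lam" "b \<le> 2*pi"
    and "b - real k / lam \<le> 1 / lam" "b < real k / lam + 2*pi"
proof -
  have lam0: "0 < lam" using lam by simp
  have step: "real (Suc k) / lam = real k / lam + 1 / lam" by (simp add: add_divide_distrib)
  have "1 / lam \<le> 1" "0 < 1 / lam" using lam by auto
  then show "0 \<le> real k / lam" "real k / lam < b" "b \<le> real (Suc k) / lam" "b \<le> 2*pi"
    "b - real k / lam \<le> 1 / lam"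
    using assms(1) lam0 step unfolding b_def by auto
  then show "b < real k / lam + 2*pi" using \<open>1 / lam \<le> 1\<close> pi_gt3 by linarith
qed

lemma scaled_germ_cell_value:
  assumes k: "real k / lam < 2*pi"
  shows "\<bar>scaled_germ f lam Y Y' X XX (real k / lam) (min (real (Suc k) / lam) (2*pi))\<bar>
           \<le> tseq f (int k) * rough_bound \<kappa> lam Y Y' X XX"
proof -
  define a b where "a = real k / lam" and "b = min (real (Suc k) / lam) (2*pi)"
  define m r where "m = unit_sup f (real k)" and "r = sqrt (1 + real k)"
  note ab = scaled_cell[OF k, folded a_def b_def]
  have pw: "(b - a) powr \<theta> \<le> lam powr (- \<theta>)" if "0 \<le> \<theta>" for \<theta>
    using powr_le_scaled[of lam "b - a" 1 \<theta>] ab lam that by simp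
  have F: "\<bar>f (lam * a)\<bar> \<le> m" and Y: "\<bar>Y a\<bar> \<le> \<bar>Y 0\<bar> + hnorm (1/2 - \<kappa>) Y * r * lam powr (\<kappa> - 1/2)"
    using scaled_cell_bounds[of k a] ab unfolding m_def r_def a_def b_def by auto
  have "\<bar>incr X a b\<bar> \<le> hnorm (1/2 - \<kappa>) X * (b - a) powr (1/2 - \<kappa>)"
    using hX ab unfolding hfin_def hnorm_def by (intro abs_le_hnorm2) auto
  also have "\<dots> \<le> hnorm (1/2 - \<kappa>) X * lam powr (\<kappa> - 1/2)"
    using pw[of "1/2 - \<kappa>"] \<kappa> hnorm_nonneg[OF hX] by (simp add: mult_left_mono)
  finally have dX: "\<bar>incr X a b\<bar> \<le> hnorm (1/2 - \<kappa>) X * lam powr (\<kappa> - 1/2)" .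
  have "\<bar>XX a b\<bar> \<le> hnorm2 (1 - 2*\<kappa>) XX * (b - a) powr (1 - 2*\<kappa>)"
    using ab by (intro abs_le_hnorm2[OF hXX]) auto
  also have "\<dots> \<le> hnorm2 (1 - 2*\<kappa>) XX * lam powr (2*\<kappa> - 1)"
    using pw[of "1 - 2*\<kappa>"] \<kappa> hnorm2_nonneg[OF hXX] by (simp add: mult_left_mono)
  finally have XX: "\<bar>XX a b\<bar> \<le> hnorm2 (1 - 2*\<kappa>) XX * lam powr (2*\<kappa> - 1)" .
  have Y': "\<bar>Y' a\<bar> \<le> supnorm Y'" using ab by (intro abs_le_supnorm[OF hY'(2)]) auto
  have "\<bar>scaled_germ f lam Y Y' X XX a b\<bar>
      \<le> \<bar>f (lam * a) * Y a * incr X a b\<bar> + \<bar>f (lam * a) * Y' a * XX a b\<bar>"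
    using ab unfolding scaled_germ_def rough_germ_def by simp
  also have "\<dots> \<le> m * ((\<bar>Y 0\<bar> + hnorm (1/2 - \<kappa>) Y * r * lam powr (\<kappa> - 1/2)) * hnorm (1/2 - \<kappa>) X
        * lam powr (\<kappa> - 1/2) + supnorm Y' * hnorm2 (1 - 2*\<kappa>) XX * lam powr (2*\<kappa> - 1))"
    using abs_mult3_le[OF F Y dX] abs_mult3_le[OF F Y' XX] by (simp add: algebra_simps)
  also have "\<dots> \<le> m * (r * rough_bound \<kappa> lam Y Y' X XX)"
    using rough_bound_ge(2)[of r] unit_sup_nonneg[OF f] by (intro mult_left_mono) (auto simp: r_def m_def)
  finally show ?thesis by (simp add: a_def b_def tseq_of_nat m_def r_def mult_ac)
qed

lemma scaled_germ_cell_sewing: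
  assumes k: "real k / lam < 2*pi"
    and A: "finite A" "A \<noteq> {}" "A \<subseteq> {real k / lam..min (real (Suc k) / lam) (2*pi)}"
  shows "\<bar>chain_sum (scaled_germ f lam Y Y' X XX) A - scaled_germ f lam Y Y' X XX (Min A) (Max A)\<bar>
           \<le> (sewing_const (1 + \<kappa>) + sewing_const (3/2 - \<kappa>) + sewing_const (2 - 2*\<kappa>))
              * (tseq f (int k) * rough_bound \<kappa> lam Y Y' X XX)"
proof -
  define a b where "a = real k / lam" and "b = min (real (Suc k) / lam) (2*pi)"
  define m r where "m = unit_sup f (real k)" and "r = sqrt (1 + real k)"
  define MY where "MY = \<bar>Y 0\<bar> + hnorm (1/2 - \<kappa>) Y * r * lam powr (\<kappa> - 1/2)"
  define Q where "Q = hnorm2 (1/2 + 2*\<kappa>) (remainder Y Y' X) * hnorm (1/2 - \<kappa>) X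
                      + hnorm (3*\<kappa>) Y' * hnorm2 (1 - 2*\<kappa>) XX"
  define K where "K = [m * Q, lam * m * MY * hnorm (1/2 - \<kappa>) X, lam * m * supnorm Y' * hnorm2 (1 - 2*\<kappa>) XX]"
  define \<theta> where "\<theta> = [1 + \<kappa>, 3/2 - \<kappa>, 2 - 2*\<kappa>]"
  note ab = scaled_cell[OF k, folded a_def b_def]
  have m: "0 \<le> m" and r: "1 \<le> r" using unit_sup_nonneg[OF f] by (simp_all add: m_def r_def)
  have Y: "\<bar>Y x\<bar> \<le> MY" if "a \<le> x" "x \<le> b" for x
    using scaled_cell_bounds(2)[of k x] that ab unfolding MY_def r_def a_def by simp
  have K: "0 \<le> K ! i" and \<theta>: "1 < \<theta> ! i" if "i \<in> {..<3}" for i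
    using that m lam Y[of a] ab \<kappa> hnorm_nonneg[OF hX] hnorm_nonneg[OF hY'(1)] supnorm_nonneg[OF hY'(2)]
      hnorm2_nonneg[OF hXX] hnorm2_nonneg[OF hR]
    by (auto simp: K_def \<theta>_def Q_def less_Suc_eq numeral_3_eq_3 intro!: mult_nonneg_nonneg add_nonneg_nonneg)
  have "\<bar>chain_sum (scaled_germ f lam Y Y' X XX) A - scaled_germ f lam Y Y' X XX (Min A) (Max A)\<bar>
      \<le> (\<Sum>i<3. sewing_const (\<theta> ! i) * K ! i * (Max A - Min A) powr (\<theta> ! i))"
  proof (rule sewing_bound_powr[OF _ _ K \<theta> A[unfolded a_def[symmetric] b_def[symmetric]]])
    show "scaled_germ f lam Y Y' X XX x x = 0" for x by (simp add: scaled_germ_def rough_germ_def)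
    fix u v w assume uvw: "a \<le> u" "u \<le> v" "v \<le> w" "w \<le> b"
    show "\<bar>scaled_germ f lam Y Y' X XX u w - scaled_germ f lam Y Y' X XX u v - scaled_germ f lam Y Y' X XX v w\<bar>
        \<le> (\<Sum>i<3. K ! i * (w - u) powr (\<theta> ! i))"
      using rough_germ_defect_bound[OF \<kappa> rp hX hXX hY' hR, where F = "\<lambda>x. f (lam * x)" and lo = a
          and hi = b and MF = m and LF = "lam * m" and MY = MY, OF _ _ _ Y _ _ uvw]
        scaled_cell_bounds(1)[of k] scaled_cell_lipschitz[of k] ab m lam uvw
      unfolding scaled_germ_def
      by (simp add: K_def \<theta>_def Q_def a_def m_def eval_nat_numeral algebra_simps)
  qed
  also have "\<dots> \<le> (\<Sum>i<3. sewing_const (\<theta> ! i) * (m * (r * rough_bound \<kappa> lam Y Y' X XX)))"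
  proof (rule sum_mono)
    fix i :: nat assume "i \<in> {..<3}"
    have "Min A \<in> A" "Max A \<in> A" using A by simp_all
    then have "a \<le> Min A" "Max A \<le> b" "Min A \<le> Max A"
      using A(1,3) by (auto simp: a_def b_def)
    then have "0 \<le> Max A - Min A" "Max A - Min A \<le> 1 / lam" using ab(5) by linarith+
    from scaled_germ_cell_terms[OF this r m] \<open>i \<in> {..<3}\<close>
    have "K ! i * (Max A - Min A) powr (\<theta> ! i) \<le> m * (r * rough_bound \<kappa> lam Y Y' X XX)"
      by (auto simp: K_def \<theta>_def Q_def MY_def less_Suc_eq numeral_3_eq_3 algebra_simps)
    then show "sewing_const (\<theta> ! i) * K ! i * (Max A - Min A) powr (\<theta> ! i)
        \<le> sewing_const (\<theta> ! i) * (m * (r * rough_bound \<kappa> lam Y Y' X XX))"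
      using sewing_const_pos[OF \<theta>[OF \<open>i \<in> {..<3}\<close>]] by (simp add: mult.assoc mult_left_mono)
  qed
  also have "\<dots> = (sewing_const (1 + \<kappa>) + sewing_const (3/2 - \<kappa>) + sewing_const (2 - 2*\<kappa>))
              * (tseq f (int k) * rough_bound \<kappa> lam Y Y' X XX)"
    by (simp add: \<theta>_def eval_nat_numeral tseq_of_nat m_def r_def algebra_simps)
  finally show ?thesis .
qed

lemma rough_bound_nonneg: "0 \<le> rough_bound \<kappa> lam Y Y' X XX"
  using rough_bound_ge(1)[of 1] hnorm_nonneg[OF hX] hnorm_nonneg[OF hY'(1)]
    hnorm2_nonneg[OF hXX] hnorm2_nonneg[OF hR]
  by (smt (verit) mult_nonneg_nonneg powr_ge_zero)

lemma scaled_rough_integral_bound: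
  assumes "triple_finite f"
  shows "\<exists>I. has_rough_integral (\<lambda>x. f (lam * x) * Y x) (\<lambda>x. f (lam * x) * Y' x) X XX I \<and>
           \<bar>I\<bar> \<le> (1 + sewing_const (1 + \<kappa>) + sewing_const (3/2 - \<kappa>) + sewing_const (2 - 2*\<kappa>))
                  * triple f * rough_bound \<kappa> lam Y Y' X XX"
proof -
  let ?\<Xi> = "scaled_germ f lam Y Y' X XX"
  define c where "c = sewing_const (1 + \<kappa>) + sewing_const (3/2 - \<kappa>) + sewing_const (2 - 2*\<kappa>)"
  define W where "W = rough_bound \<kappa> lam Y Y' X XX"
  define N where "N = nat \<lceil>2*pi*lam\<rceil>"
  define e where "e k = min (real k / lam) (2*pi)" for k
  obtain K where defect: "0 \<le> K" "\<And>a b d. 0 \<le> a \<Longrightarrow> a \<le> b \<Longrightarrow> b \<le> d \<Longrightarrow> d \<le> 2*pi \<Longrightarrow> d - a \<le> 1 \<Longrightarrow>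
      \<bar>?\<Xi> a d - ?\<Xi> a b - ?\<Xi> b d\<bar> \<le> K * (d - a) powr (1 + min \<kappa> (1/2 - \<kappa>))"
    using scaled_germ_defect by blast
  have diag: "?\<Xi> a a = 0" for a by (simp add: scaled_germ_def rough_germ_def)
  have exponent: "1 < 1 + min \<kappa> (1/2 - \<kappa>)" using \<kappa> by simp
  obtain I where I: "germ_limit ?\<Xi> I"
    using germ_limit_exists[OF diag defect(2) defect(1) exponent] by blast
  have E: "partition N e" and cell: "\<And>k. k < N \<Longrightarrow> real k / lam < 2*pi"
    using partition_scaled_grid[of lam] lam unfolding N_def e_def by auto
  then have e: "e k = real k / lam" "e (Suc k) = min (real (Suc k) / lam) (2*pi)" if "k < N" for k
    using that by (simp_all add: e_def)
  have "\<bar>I\<bar> \<le> \<bar>germ_sum ?\<Xi> N e\<bar> + (\<Sum>k<N. c * (tseq f (int k) * W))"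
    using germ_limit_bound[OF diag defect(2) defect(1) exponent I E] scaled_germ_cell_sewing cell e
    unfolding c_def W_def by simp
  also have "\<bar>germ_sum ?\<Xi> N e\<bar> \<le> (\<Sum>k<N. tseq f (int k) * W)"
    unfolding germ_sum_def W_def
    using scaled_germ_cell_value cell e by (intro order_trans[OF sum_abs] sum_mono) simp
  also have "(\<Sum>k<N. tseq f (int k) * W) + (\<Sum>k<N. c * (tseq f (int k) * W))
      = (1 + c) * W * (\<Sum>k<N. tseq f (int k))"
    by (simp add: sum_distrib_left sum_distrib_right sum.distrib algebra_simps)
  also have "\<dots> \<le> (1 + c) * W * triple f"
    using sum_tseq_le_triple[OF f assms] rough_bound_nonneg
      sewing_const_pos[of "1 + \<kappa>"] sewing_const_pos[of "3/2 - \<kappa>"] sewing_const_pos[of "2 - 2*\<kappa>"] \<kappa>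
    unfolding c_def W_def by (intro mult_left_mono) auto
  finally have "\<bar>I\<bar> \<le> (1 + c) * triple f * W" by (simp add: algebra_simps)
  moreover have "has_rough_integral (\<lambda>x. f (lam * x) * Y x) (\<lambda>x. f (lam * x) * Y' x) X XX I"
    using I unfolding has_rough_integral_iff_germ_limit scaled_germ_def .
  ultimately show ?thesis unfolding c_def W_def by (auto simp: add.assoc)
qed

end

theorem proposition3p8:
  fixes \<kappa> :: real
  assumes "0 < \<kappa>" and "\<kappa> < 1/2"
  shows "\<exists>C :: real \<Rightarrow> real. \<forall>f lam X XX Y Y'.
    C1 f \<and> triple_finite f \<and> lam \<ge> 1 \<and> rough_path X XX \<and>
    circ_periodic Y \<and> circ_periodic Y' \<and>
    hfin (1/2 - \<kappa>) X \<and> hfin (1/2 - \<kappa>) Y \<and> hfin2 (1 - 2*\<kappa>) XX \<and>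
    hfin (3*\<kappa>) Y' \<and> supfin Y' \<and> hfin2 (1/2 + 2*\<kappa>) (remainder Y Y' X)
    \<longrightarrow> (\<exists>I. has_rough_integral (\<lambda>x. f (lam * x) * Y x) (\<lambda>x. f (lam * x) * Y' x) X XX I \<and>
             \<bar>I\<bar> \<le> C (triple f) * (lam powr (\<kappa> - 1/2) * \<bar>Y 0\<bar> * hnorm (1/2 - \<kappa>) X
                                   + lam powr (2*\<kappa> - 1) * Kkappa \<kappa> Y Y' X XX))"
proof (intro exI[of _ "\<lambda>t. (1 + sewing_const (1 + \<kappa>) + sewing_const (3/2 - \<kappa>) + sewing_const (2 - 2*\<kappa>)) * t"]
    allI impI, elim conjE)
  fix f :: "real \<Rightarrow> real" and lam :: real and X Y Y' :: "real \<Rightarrow> real" and XX :: "real \<Rightarrow> real \<Rightarrow> real"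
  assume h: "C1 f" "triple_finite f" "lam \<ge> 1" "rough_path X XX" "circ_periodic Y" "circ_periodic Y'"
    "hfin (1/2 - \<kappa>) X" "hfin (1/2 - \<kappa>) Y" "hfin2 (1 - 2*\<kappa>) XX" "hfin (3*\<kappa>) Y'" "supfin Y'"
    "hfin2 (1/2 + 2*\<kappa>) (remainder Y Y' X)"
  show "\<exists>I. has_rough_integral (\<lambda>x. f (lam * x) * Y x) (\<lambda>x. f (lam * x) * Y' x) X XX I \<and>
      \<bar>I\<bar> \<le> (1 + sewing_const (1 + \<kappa>) + sewing_const (3/2 - \<kappa>) + sewing_const (2 - 2*\<kappa>)) * triple f *
             (lam powr (\<kappa> - 1/2) * \<bar>Y 0\<bar> * hnorm (1/2 - \<kappa>) X + lam powr (2*\<kappa> - 1) * Kkappa \<kappa> Y Y' X XX)"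
    using scaled_rough_integral_bound[OF assms h(1,3,4,5,7-12) h(2)] unfolding rough_bound_def .
qed

end
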